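(* Let $\mathfrak g=\mathcal W_1^{++}=\mathrm{Span}\{d_i: i\in\mathbb Z_+\}$ with brackets $[d_m,d_n]=(m-n)d_{m+n}$. Fix $k\in\mathbb N$ and let $\mathfrak p_k=\mathrm{Span}\{d_i: i\ge k\}$. Let $\phi_k:\mathfrak p_k\to\mathbb C$ be a nonzero Lie algebra homomorphism. Then the universal quasi-Whittaker module $W(\phi_k)=\mathcal U(\mathfrak g)\otimes_{\mathcal U(\mathfrak p_k)}\mathbb C w_{\phi_k}$ is irreducible if and only if $\phi_k(d_{2k-1})\neq0$ or $\phi_k(d_{2k})\neq0$.
   Context: $\mathbb Z_+$ denotes the nonnegative integers and $\mathbb N$ the positive integers. A Lie algebra homomorphism $\phi_k:\mathfrak p_k\to\mathbb C$ is a linear map vanishing on $[\mathfrak p_k,\mathfrak p_k]=\mathrm{Span}\{d_i:i\ge 2k+1\}$. $\mathbb C w_{\phi_k}$ is the one-dimensional $\mathfrak p_k$-module with $pw_{\phi_k}=\phi_k(p)w_{\phi_k}$. *)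

theory Defs
  imports Complex_Main "HOL-Library.Function_Algebras"
begin

text \<open>
  The tensor algebra T(g) is represented as finitely supported functions
  nat list \<Rightarrow> complex (the word [i1,...,ir] standing for d_i1 ... d_ir).
  U(g) = T(g)/I where I is the two-sided ideal generated by
  d_i d_j - d_j d_i - (i - j) d_{i+j}; and
  U(g) \<otimes>_{U(p_k)} C w = U(g) / U(g) (p - phi(p) : p in p_k) = T(g) / J,
  where J = I + T(g) (d_i - phi(d_i) : i \<ge> k).
  The g-action on the quotient is left multiplication by the letters d_i.
\<close>

type_synonym tens = "nat list \<Rightarrow> complex"

definition tscale :: "complex \<Rightarrow> tens \<Rightarrow> tens" where
  "tscale c f = (\<lambda>x. c * f x)"

definition Tens :: "tens set" where
  "Tens = {f. finite {x. f x \<noteq> 0}}"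

definition word :: "nat list \<Rightarrow> tens" where
  "word w = (\<lambda>x. if x = w then 1 else 0)"

definition lmul :: "nat \<Rightarrow> tens \<Rightarrow> tens" where
  "lmul i f = (\<lambda>x. case x of [] \<Rightarrow> 0 | j # y \<Rightarrow> (if j = i then f y else 0))"

definition lie_rels :: "tens set" where
  "lie_rels = {word (a @ [i, j] @ b) - word (a @ [j, i] @ b)
               - tscale (of_int (int i - int j)) (word (a @ [i + j] @ b)) | a b i j. True}"

definition whit_rels :: "nat \<Rightarrow> (nat \<Rightarrow> complex) \<Rightarrow> tens set" where
  "whit_rels k phi = {word (a @ [i]) - tscale (phi i) (word a) | a i. k \<le> i}"

definition Jrel :: "nat \<Rightarrow> (nat \<Rightarrow> complex) \<Rightarrow> tens set" where
  "Jrel k phi = module.span tscale (lie_rels \<union> whit_rels k phi)"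

text \<open>g-submodules of T(g)/J correspond to subspaces S of T(g) with J \<subseteq> S,
  closed under the action of all d_i.  W(phi_k) is irreducible iff it is nonzero
  (J \<noteq> T(g)) and its only submodules are 0 (S = J) and itself (S = T(g)).\<close>
definition quasi_whittaker_irreducible :: "nat \<Rightarrow> (nat \<Rightarrow> complex) \<Rightarrow> bool" where
  "quasi_whittaker_irreducible k phi \<longleftrightarrow>
     Jrel k phi \<noteq> Tens \<and>
     (\<forall>S. module.subspace tscale S \<and> Jrel k phi \<subseteq> S \<and> S \<subseteq> Tens \<and>
          (\<forall>i. \<forall>f\<in>S. lmul i f \<in> S)
          \<longrightarrow> S = Jrel k phi \<or> S = Tens)"

end

theory Submission
  imports Defs "HOL-Library.Multiset"
begin

(*
  W(phi) is nonzero: T(g) maps to an explicit model of the induced module, in which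
  d_(k-1), ..., d_1 are adjoined one at a time (each acting on coefficient functions through
  the commutator expansion of d_n d_j^a) and d_0 acts as a grading; this map kills the relations
  but not the empty word.

  Modulo the relations and lower degree, every tensor is a combination of sorted words in
  d_0, ..., d_(k-1) (PBW), and for i >= k the operator d_i - phi(d_i) lowers the degree of such a
  leading term h, acting on it as the derivation sum_y (i - y) phi(d_(i+y)) d/d(d_y). When
  phi(d_(2k-1)) or phi(d_(2k)) is nonzero these derivations are triangular in y, so one of them
  does not kill h; descending from any element outside the relations one reaches a nonzero
  scalar, which generates everything.

  When both vanish, phi extends to a character of p_(k-1) taking an arbitrary value c at
  d_(k-1); the corresponding proper submodules all contain the relations but cannot all equal
  them.
*)

section \<open>The tensor algebra and the relations\<close>

declare plus_fun_apply [simp del] zero_fun_apply [simp del] minus_apply [simp del]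
  uminus_apply [simp del]

interpretation T: module tscale
  by standard (auto simp: tscale_def algebra_simps fun_eq_iff plus_fun_apply)

lemma tscale_apply: "tscale c f x = c * f x"
  by (simp add: tscale_def)

lemmas tens_apply = plus_fun_apply zero_fun_apply minus_apply uminus_apply tscale_apply

lemma sum_fun_apply: "(\<Sum>a\<in>A. f a) x = (\<Sum>a\<in>A. f a x)"
  by (induct A rule: infinite_finite_induct) (auto simp: tens_apply)

lemma word_apply: "word w x = (if x = w then 1 else 0)"
  by (simp add: word_def)

definition supp :: "tens \<Rightarrow> nat list set" where
  "supp f = {x. f x \<noteq> 0}"

lemma in_supp_iff: "x \<in> supp f \<longleftrightarrow> f x \<noteq> 0"
  by (simp add: supp_def)

lemma Tens_iff_finite_supp: "f \<in> Tens \<longleftrightarrow> finite (supp f)"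
  by (simp add: Tens_def supp_def)

lemma supp_add: "supp (f + g) \<subseteq> supp f \<union> supp g"
  by (auto simp: supp_def tens_apply)

lemma supp_tscale: "supp (tscale c f) \<subseteq> supp f"
  by (auto simp: supp_def tens_apply)

lemma Tens_subspace: "T.subspace Tens"
proof -
  have "finite (supp f) \<Longrightarrow> finite (supp g) \<Longrightarrow> finite (supp (f + g))"
    and "finite (supp f) \<Longrightarrow> finite (supp (tscale c f))" for f g c
    using supp_add supp_tscale by (meson finite_UnI finite_subset)+
  moreover have "supp 0 = {}" by (simp add: supp_def tens_apply)
  ultimately show ?thesis
    unfolding T.subspace_def by (auto simp: Tens_iff_finite_supp)
qed

lemmas Tens_add = T.subspace_add[OF Tens_subspace]
  and Tens_diff = T.subspace_diff[OF Tens_subspace]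
  and Tens_scale = T.subspace_scale[OF Tens_subspace]
  and Tens_sum = T.subspace_sum[OF Tens_subspace]

lemma word_in_Tens [simp]: "word w \<in> Tens"
  by (simp add: Tens_def word_def)

lemma tens_expansion: "f \<in> Tens \<Longrightarrow> f = (\<Sum>a\<in>supp f. tscale (f a) (word a))"
  by (auto simp: fun_eq_iff sum_fun_apply tens_apply word_apply supp_def Tens_def
      if_distrib[of "(*) _"] cong: if_cong)

lemma sum_word_apply_nonzero:
  "(\<Sum>x\<in>A. tscale (c x) (word (w x))) b \<noteq> 0 \<Longrightarrow> \<exists>x\<in>A. c x \<noteq> 0 \<and> w x = b"
proof -
  assume "(\<Sum>x\<in>A. tscale (c x) (word (w x))) b \<noteq> 0"
  then obtain x where "x \<in> A" "c x * word (w x) b \<noteq> 0"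
    by (auto simp: sum_fun_apply tscale_apply elim: sum.not_neutral_contains_not_neutral)
  then show ?thesis by (auto simp: word_apply split: if_splits)
qed

lemma lmul_word [simp]: "lmul i (word a) = word (i # a)"
  by (auto simp: lmul_def word_def fun_eq_iff tens_apply split: list.splits)

interpretation lmul: module_hom tscale tscale "lmul i" for i
  by unfold_locales (auto simp: lmul_def fun_eq_iff tens_apply split: list.splits)

lemma supp_lmul: "supp (lmul i f) \<subseteq> (#) i ` supp f"
proof
  fix x assume "x \<in> supp (lmul i f)"
  then show "x \<in> (#) i ` supp f"
    by (cases x) (auto simp: lmul_def supp_def split: if_splits)
qed

lemma lmul_in_Tens: "f \<in> Tens \<Longrightarrow> lmul i f \<in> Tens"
  unfolding Tens_iff_finite_supp using supp_lmul[of i f] by (blast intro: finite_subset)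

lemma Tens_subset_if_word_Nil:
  assumes S: "T.subspace S" and closed: "\<forall>i. \<forall>f\<in>S. lmul i f \<in> S" and unit: "word [] \<in> S"
  shows "Tens \<subseteq> S"
proof
  have words: "word a \<in> S" for a
    by (induct a) (use unit closed in \<open>auto simp flip: lmul_word\<close>)
  fix f assume "f \<in> Tens"
  then show "f \<in> S"
    by (subst tens_expansion) (auto intro: T.subspace_sum[OF S] T.subspace_scale[OF S] words)
qed

lemma Jrel_subspace: "T.subspace (Jrel k phi)"
  by (simp add: Jrel_def)

lemmas Jrel_add = T.subspace_add[OF Jrel_subspace]
  and Jrel_diff = T.subspace_diff[OF Jrel_subspace]
  and Jrel_scale = T.subspace_scale[OF Jrel_subspace]
  and Jrel_zero = T.subspace_0[OF Jrel_subspace]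

lemma Jrel_subset_Tens: "Jrel k phi \<subseteq> Tens"
  unfolding Jrel_def
  by (rule T.span_minimal[OF _ Tens_subspace]) (auto simp: lie_rels_def whit_rels_def
      intro!: Tens_diff Tens_scale)

lemma lie_rel_in_Jrel:
  "word (a @ [i, j] @ b) - word (a @ [j, i] @ b)
      - tscale (of_int (int i - int j)) (word (a @ [i + j] @ b))
     \<in> Jrel k phi"
  unfolding Jrel_def by (rule T.span_base) (auto simp: lie_rels_def)

lemma whit_rel_in_Jrel: "k \<le> i \<Longrightarrow> word (a @ [i]) - tscale (phi i) (word a) \<in> Jrel k phi"
  unfolding Jrel_def by (rule T.span_base) (auto simp: whit_rels_def)

lemma lmul_Jrel: "f \<in> Jrel k phi \<Longrightarrow> lmul i f \<in> Jrel k phi"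
proof -
  have "lmul i ` (lie_rels \<union> whit_rels k phi) \<subseteq> lie_rels \<union> whit_rels k phi"
  proof -
    have "lmul i ` lie_rels \<subseteq> lie_rels"
      unfolding lie_rels_def
      by (auto simp: lmul.diff lmul.scale) (metis append_Cons)
    moreover have "lmul i ` whit_rels k phi \<subseteq> whit_rels k phi"
      unfolding whit_rels_def
      by (auto simp: lmul.diff lmul.scale) (metis append_Cons)
    ultimately show ?thesis by blast
  qed
  then have "lmul i ` Jrel k phi \<subseteq> Jrel k phi"
    unfolding Jrel_def lmul.span_image[symmetric] by (rule T.span_mono)
  then show "f \<in> Jrel k phi \<Longrightarrow> lmul i f \<in> Jrel k phi" by blast
qed

lemma Jrel_eq_Tens_if_word_Nil: "word [] \<in> Jrel k phi \<Longrightarrow> Jrel k phi = Tens"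
  using Tens_subset_if_word_Nil[OF Jrel_subspace] lmul_Jrel Jrel_subset_Tens by blast

section \<open>A model of the induced module\<close>

definition step_pochhammer :: "nat \<Rightarrow> complex \<Rightarrow> nat \<Rightarrow> complex" where
  "step_pochhammer j \<alpha> r = (\<Prod>t<r. \<alpha> + of_nat (t * j))"

lemma step_pochhammer_Suc: "step_pochhammer j \<alpha> (Suc r) = \<alpha> * step_pochhammer j (\<alpha> + of_nat j) r"
  unfolding step_pochhammer_def prod.lessThan_Suc_shift
  by (intro arg_cong2[where f = "(*)"] prod.cong) (simp_all add: algebra_simps)

lemma step_pochhammer_Suc': "step_pochhammer j \<alpha> (Suc r) = step_pochhammer j \<alpha> r
    * (\<alpha> + of_nat (r * j))"
  by (simp add: step_pochhammer_def)

lemma step_pochhammer_eq_pochhammer: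
  assumes "j \<noteq> 0"
  shows "step_pochhammer j \<alpha> r = of_nat j ^ r * pochhammer (\<alpha> / of_nat j) r"
proof -
  have "of_nat j ^ r * pochhammer (\<alpha> / of_nat j) r = (\<Prod>t<r. of_nat j * (\<alpha> / of_nat j + of_nat t))"
    by (simp add: pochhammer_prod atLeast0LessThan prod.distrib)
  also have "\<dots> = step_pochhammer j \<alpha> r"
    unfolding step_pochhammer_def by (intro prod.cong refl) (use assms in \<open>simp add: field_simps\<close>)
  finally show ?thesis ..
qed

lemma step_pochhammer_binomial_sum:
  assumes "j \<noteq> 0"
  shows "step_pochhammer j (\<alpha> + \<beta>) t
    = (\<Sum>r\<le>t. of_nat (t choose r) * step_pochhammer j \<alpha> r * step_pochhammer j \<beta> (t - r))"
proof -
  have "step_pochhammer j (\<alpha> + \<beta>) t = of_nat j ^ t * (\<Sum>r\<le>t. of_nat (t choose r)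
      * pochhammer (\<alpha> / of_nat j) r * pochhammer (\<beta> / of_nat j) (t - r))"
    by (simp add: step_pochhammer_eq_pochhammer[OF assms] add_divide_distrib
        pochhammer_binomial_sum)
  also have "\<dots> = (\<Sum>r\<le>t. of_nat (t choose r) * step_pochhammer j \<alpha> r * step_pochhammer j \<beta> (t - r))"
    unfolding sum_distrib_left
  proof (rule sum.cong[OF refl])
    fix r assume "r \<in> {..t}"
    then have "of_nat j ^ t = (of_nat j ^ r * of_nat j ^ (t - r) :: complex)"
      by (simp flip: power_add)
    then show "of_nat j ^ t * (of_nat (t choose r) * pochhammer (\<alpha> / of_nat j) r
        * pochhammer (\<beta> / of_nat j) (t - r))
      = of_nat (t choose r) * step_pochhammer j \<alpha> r * step_pochhammer j \<beta> (t - r)"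
      by (simp add: step_pochhammer_eq_pochhammer[OF assms] mult_ac)
  qed
  finally show ?thesis .
qed

lemma step_pochhammer_commutator:
  assumes "j \<noteq> 0"
  shows "(\<Sum>r\<le>t. of_nat (t choose r) * step_pochhammer j \<alpha> r * step_pochhammer j \<beta> (t - r)
            * ((\<alpha> + of_nat (r * j)) - (\<beta> + of_nat ((t - r) * j))))
    = (\<alpha> - \<beta>) * step_pochhammer j (\<alpha> + \<beta> + of_nat j) t"
proof -
  let ?P = "step_pochhammer j"
  have "(\<Sum>r\<le>t. of_nat (t choose r) * ?P \<alpha> r * ?P \<beta> (t - r)
            * ((\<alpha> + of_nat (r * j)) - (\<beta> + of_nat ((t - r) * j))))
    = (\<Sum>r\<le>t. \<alpha> * (of_nat (t choose r) * ?P (\<alpha> + of_nat j) r * ?P \<beta> (t - r)))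
      - (\<Sum>r\<le>t. \<beta> * (of_nat (t choose r) * ?P \<alpha> r * ?P (\<beta> + of_nat j) (t - r)))"
    unfolding sum_subtractf[symmetric]
  proof (rule sum.cong[OF refl])
    fix r
    have a: "?P \<alpha> r * (\<alpha> + of_nat (r * j)) = \<alpha> * ?P (\<alpha> + of_nat j) r"
      and b: "?P \<beta> (t - r) * (\<beta> + of_nat ((t - r) * j)) = \<beta> * ?P (\<beta> + of_nat j) (t - r)"
      by (metis step_pochhammer_Suc step_pochhammer_Suc')+
    have "of_nat (t choose r) * ?P \<alpha> r * ?P \<beta> (t - r)
            * ((\<alpha> + of_nat (r * j)) - (\<beta> + of_nat ((t - r) * j)))
      = of_nat (t choose r) * ?P \<beta> (t - r) * (?P \<alpha> r * (\<alpha> + of_nat (r * j)))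
        - of_nat (t choose r) * ?P \<alpha> r * (?P \<beta> (t - r) * (\<beta> + of_nat ((t - r) * j)))"
      by (simp only: algebra_simps)
    also have "\<dots> = \<alpha> * (of_nat (t choose r) * ?P (\<alpha> + of_nat j) r * ?P \<beta> (t - r))
      - \<beta> * (of_nat (t choose r) * ?P \<alpha> r * ?P (\<beta> + of_nat j) (t - r))"
      unfolding a b by (simp only: ac_simps)
    finally show "of_nat (t choose r) * ?P \<alpha> r * ?P \<beta> (t - r)
            * ((\<alpha> + of_nat (r * j)) - (\<beta> + of_nat ((t - r) * j)))
      = \<alpha> * (of_nat (t choose r) * ?P (\<alpha> + of_nat j) r * ?P \<beta> (t - r))
      - \<beta> * (of_nat (t choose r) * ?P \<alpha> r * ?P (\<beta> + of_nat j) (t - r))" .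
  qed
  also have "\<dots> = \<alpha> * ?P (\<alpha> + of_nat j + \<beta>) t - \<beta> * ?P (\<alpha> + (\<beta> + of_nat j)) t"
    by (simp only: sum_distrib_left[symmetric] step_pochhammer_binomial_sum[OF assms])
  also have "\<dots> = (\<alpha> - \<beta>) * ?P (\<alpha> + \<beta> + of_nat j) t"
    by (simp add: algebra_simps)
  finally show ?thesis .
qed

text \<open>The coefficient in \<open>[\<dots>[[d_n, d_j], d_j] \<dots>, d_j] = ad_coeff j n r * d_(n + r j)\<close>
  (\<open>r\<close> brackets).\<close>

definition ad_coeff :: "nat \<Rightarrow> nat \<Rightarrow> nat \<Rightarrow> complex" where
  "ad_coeff j n r = step_pochhammer j (of_nat n - of_nat j) r"

lemma ad_coeff_0 [simp]: "ad_coeff j n 0 = 1"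
  by (simp add: ad_coeff_def step_pochhammer_def)

lemma ad_coeff_Suc: "ad_coeff j n (Suc s) = (of_nat n - of_nat j) * ad_coeff j (n + j) s"
  by (simp add: ad_coeff_def step_pochhammer_Suc)

lemma ad_coeff_commutator:
  assumes "j \<noteq> 0"
  shows "(\<Sum>r\<le>t. of_nat (t choose r) * ad_coeff j m r * ad_coeff j n (t - r)
            * of_int (int (m + r * j) - int (n + (t - r) * j)))
    = of_int (int m - int n) * ad_coeff j (m + n) t"
proof -
  let ?a = "of_nat m - of_nat j :: complex" and ?b = "of_nat n - of_nat j :: complex"
  have e: "(of_int (int (m + r * j) - int (n + (t - r) * j)) :: complex)
      = (?a + of_nat (r * j)) - (?b + of_nat ((t - r) * j))" for r
    by simp
  have "(\<Sum>r\<le>t. of_nat (t choose r) * ad_coeff j m r * ad_coeff j n (t - r)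
            * of_int (int (m + r * j) - int (n + (t - r) * j)))
    = (?a - ?b) * step_pochhammer j (?a + ?b + of_nat j) t"
    unfolding e ad_coeff_def by (rule step_pochhammer_commutator[OF assms])
  also have "?a + ?b + of_nat j = of_nat (m + n) - of_nat j"
    by simp
  also have "?a - ?b = of_int (int m - int n)"
    by simp
  finally show ?thesis unfolding ad_coeff_def .
qed

definition slice :: "tens \<Rightarrow> nat \<Rightarrow> tens" where
  "slice F a = (\<lambda>l. F (a # l))"

definition raise_head :: "tens \<Rightarrow> tens" where
  "raise_head F = (\<lambda>l. case l of [] \<Rightarrow> 0 | a # l' \<Rightarrow> if a = 0 then 0 else F ((a - 1) # l'))"

interpretation slice: module_hom tscale tscale "\<lambda>F. slice F a" for a
  by unfold_locales (simp_all add: slice_def fun_eq_iff tens_apply)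

interpretation raise_head: module_hom tscale tscale raise_head
  by unfold_locales (simp_all add: raise_head_def fun_eq_iff tens_apply split: list.split)

lemma slice_apply: "slice F a l = F (a # l)"
  by (simp add: slice_def)

lemma slice_raise_head: "slice (raise_head F) t = (if t = 0 then 0 else slice F (t - 1))"
  by (simp add: slice_def raise_head_def fun_eq_iff tens_apply)

lemma raise_head_Nil [simp]: "raise_head F [] = 0"
  by (simp add: raise_head_def)

lemma raise_head_Cons: "raise_head F (a # l) = (if a = 0 then 0 else F ((a - 1) # l))"
  by (simp add: raise_head_def)

text \<open>\<open>ind_action k psi L n\<close> is the action of \<open>d_n\<close>, \<open>n \<ge> k - L\<close>, on the
  \<open>p_(k-L)\<close>-module induced from the character \<open>psi\<close> of \<open>p_k\<close>. Writing \<open>j = k - L\<close>,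
  \<open>F (a # l)\<close> is the coefficient of \<open>d_j^a\<close> times the basis vector \<open>l\<close> of the previous
  level; \<open>d_j\<close> raises \<open>a\<close>, and every other \<open>d_n\<close> is moved past \<open>d_j^a\<close> by
  \<open>x y^a = (\<Sum>s. (a choose s) y^(a-s) [\<dots>[x, y]\<dots>, y])\<close>. The sum can be cut off at
  \<open>s = 2k + 1\<close> because \<open>d_m\<close> acts as zero for \<open>m > 2k\<close>.\<close>

declare sum.atMost_Suc [simp del]

primrec ind_action :: "nat \<Rightarrow> (nat \<Rightarrow> complex) \<Rightarrow> nat \<Rightarrow> nat \<Rightarrow> tens \<Rightarrow> tens" where
  "ind_action k psi 0 n F = tscale (psi n) F"
| "ind_action k psi (Suc L) n F =
     (if n = k - Suc L then raise_head F
      else (\<lambda>l. case l of [] \<Rightarrow> 0 | a # l' \<Rightarrow>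
        (\<Sum>s\<le>Suc (2 * k). (ad_coeff (k - Suc L) n s * of_nat ((a + s) choose s))
            * ind_action k psi L (n + s * (k - Suc L)) (slice F (a + s)) l')))"

lemma ind_action_raise: "ind_action k psi (Suc L) (k - Suc L) F = raise_head F"
  by simp

lemma ind_action_Nil [simp]: "ind_action k psi (Suc L) n F [] = 0"
  by simp

lemma ind_action_Cons:
  "n \<noteq> k - Suc L \<Longrightarrow> ind_action k psi (Suc L) n F (a # l) =
     (\<Sum>s\<le>Suc (2 * k). (ad_coeff (k - Suc L) n s * of_nat ((a + s) choose s))
        * ind_action k psi L (n + s * (k - Suc L)) (slice F (a + s)) l)"
  by simp

declare ind_action.simps(2) [simp del]

lemma ind_action_add: "ind_action k psi L n (F + G) = ind_action k psi L n F
    + ind_action k psi L n G"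
proof (induct L arbitrary: n F G)
  case (Suc L)
  show ?case
  proof (cases "n = k - Suc L")
    case False
    show ?thesis
    proof
      fix l
      show "ind_action k psi (Suc L) n (F + G) l
          = (ind_action k psi (Suc L) n F + ind_action k psi (Suc L) n G) l"
        using False by (cases l)
            (simp_all add: ind_action_Cons slice.add Suc sum.distrib algebra_simps tens_apply)
    qed
  qed (simp add: ind_action_raise raise_head.add)
qed (simp add: fun_eq_iff tens_apply algebra_simps)

lemma ind_action_scale: "ind_action k psi L n (tscale c F) = tscale c (ind_action k psi L n F)"
proof (induct L arbitrary: n F)
  case (Suc L)
  show ?case
  proof (cases "n = k - Suc L")
    case False
    show ?thesis
    proof
      fix l
      show "ind_action k psi (Suc L) n (tscale c F) l = tscale c (ind_action k psi (Suc L) n F) l"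
        using False by (cases l)
            (simp_all add: ind_action_Cons slice.scale Suc sum_distrib_left algebra_simps
                tens_apply)
    qed
  qed (simp add: ind_action_raise raise_head.scale)
qed (simp add: fun_eq_iff tens_apply algebra_simps)

interpretation ind_action: module_hom tscale tscale "ind_action k psi L n" for k psi L n
  by unfold_locales (rule ind_action_add ind_action_scale)+

lemma ind_action_raise_head_Cons:
  assumes "n \<noteq> k - Suc L"
  shows "ind_action k psi (Suc L) n (raise_head F) (a # l)
    = raise_head (ind_action k psi (Suc L) n F) (a # l)
      + (\<Sum>s\<le>2 * k. ad_coeff (k - Suc L) n (Suc s) * of_nat ((a + s) choose s)
           * ind_action k psi L (n + Suc s * (k - Suc L)) (slice F (a + s)) l)"
proof (cases a)
  case 0
  then show ?thesis
    using assms
    by (simp add: ind_action_Cons sum.atMost_Suc_shift slice_raise_head raise_head_Cons tens_apply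
        binomial_eq_0)
next
  case (Suc b)
  let ?j = "k - Suc L"
  let ?T = "\<lambda>s. ind_action k psi L (n + s * ?j) (slice F (b + s)) l"
  have pascal: "(Suc b + s) choose s = ((b + s) choose s)
      + (if s = 0 then 0 else (b + s) choose (s - 1))"
    for s by (cases s) simp_all
  have "ind_action k psi (Suc L) n (raise_head F) (a # l)
      = (\<Sum>s\<le>Suc (2 * k). ad_coeff ?j n s * of_nat ((Suc b + s) choose s) * ?T s)"
    using assms Suc by (simp add: ind_action_Cons slice_raise_head)
  also have "\<dots> = (\<Sum>s\<le>Suc (2 * k). ad_coeff ?j n s * of_nat ((b + s) choose s) * ?T s)
        + (\<Sum>s\<le>Suc (2 * k). ad_coeff ?j n s
             * of_nat (if s = 0 then 0 else (b + s) choose (s - 1)) * ?T s)"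
    unfolding sum.distrib[symmetric]
    by (rule sum.cong[OF refl]) (simp only: pascal of_nat_add distrib_left distrib_right)
  also have "(\<Sum>s\<le>Suc (2 * k). ad_coeff ?j n s * of_nat ((b + s) choose s) * ?T s)
      = raise_head (ind_action k psi (Suc L) n F) (a # l)"
    using assms Suc by (simp add: ind_action_Cons raise_head_Cons)
  also have "(\<Sum>s\<le>Suc (2 * k). ad_coeff ?j n s
             * of_nat (if s = 0 then 0 else (b + s) choose (s - 1)) * ?T s)
      = (\<Sum>s\<le>2 * k. ad_coeff ?j n (Suc s) * of_nat ((a + s) choose s)
           * ind_action k psi L (n + Suc s * ?j) (slice F (a + s)) l)"
    using Suc by (subst sum.atMost_Suc_shift) simp
  finally show ?thesis .
qed

lemma slice_ind_action:
  assumes "n \<noteq> k - Suc L"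
  shows "slice (ind_action k psi (Suc L) n F) b =
    (\<Sum>s\<le>Suc (2 * k). tscale (ad_coeff (k - Suc L) n s * of_nat ((b + s) choose s))
       (ind_action k psi L (n + s * (k - Suc L)) (slice F (b + s))))"
  using assms by (simp add: fun_eq_iff slice_apply sum_fun_apply tscale_apply ind_action_Cons)

lemma ind_action_twice_Cons:
  assumes "m \<noteq> k - Suc L" "n \<noteq> k - Suc L"
  shows "ind_action k psi (Suc L) m (ind_action k psi (Suc L) n F) (a # l) =
    (\<Sum>r\<le>Suc (2 * k). \<Sum>s\<le>Suc (2 * k).
       (ad_coeff (k - Suc L) m r * ad_coeff (k - Suc L) n s
          * of_nat (((a + r) choose r) * ((a + r + s) choose s)))
       * ind_action k psi L (m + r * (k - Suc L))
           (ind_action k psi L (n + s * (k - Suc L)) (slice F (a + r + s))) l)"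
  unfolding ind_action_Cons[OF assms(1)] slice_ind_action[OF assms(2)]
    ind_action.sum ind_action.scale sum_fun_apply tscale_apply sum_distrib_left
  by (intro sum.cong refl) (simp add: ac_simps)

lemma binomial_exchange:
  "((a + s) choose s) * ((a + s + r) choose r) = ((a + r) choose r) * ((a + r + s) choose s)"
proof -
  have "((a + r) choose r) * ((a + r + s) choose s) = ((a + r + s) choose (r + s))
      * ((r + s) choose s)"
    for r s using choose_mult_lemma[of r a s] by (simp add: ac_simps)
  from this[of s r] this[of r s] show ?thesis
    using binomial_symmetric[of s "r + s"] by (simp add: ac_simps)
qed

lemma binomial_triangle:
  assumes "r \<le> t"
  shows "((a + r) choose r) * ((a + r + (t - r)) choose (t - r)) = ((a + t) choose t)
      * (t choose r)"
proof -
  have "((a + r) choose r) * ((a + r + (t - r)) choose (t - r))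
      = ((a + r + (t - r)) choose (r + (t - r))) * ((r + (t - r)) choose (t - r))"
    using choose_mult_lemma[of r a "t - r"] by (simp add: ac_simps)
  also have "\<dots> = ((a + t) choose t) * (t choose r)"
    using assms binomial_symmetric[OF assms] by simp
  finally show ?thesis .
qed

lemma ind_action_commutator_Cons:
  assumes "m \<noteq> k - Suc L" "n \<noteq> k - Suc L"
  shows "(ind_action k psi (Suc L) m (ind_action k psi (Suc L) n F)
        - ind_action k psi (Suc L) n (ind_action k psi (Suc L) m F)) (a # l) =
    (\<Sum>r\<le>Suc (2 * k). \<Sum>s\<le>Suc (2 * k).
       (ad_coeff (k - Suc L) m r * ad_coeff (k - Suc L) n s
          * of_nat (((a + r) choose r) * ((a + r + s) choose s)))
       * (ind_action k psi L (m + r * (k - Suc L))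
           (ind_action k psi L (n + s * (k - Suc L)) (slice F (a + r + s)))
          - ind_action k psi L (n + s * (k - Suc L))
              (ind_action k psi L (m + r * (k - Suc L)) (slice F (a + r + s)))) l)"
proof -
  let ?j = "k - Suc L"
  have "ind_action k psi (Suc L) n (ind_action k psi (Suc L) m F) (a # l) =
    (\<Sum>s\<le>Suc (2 * k). \<Sum>r\<le>Suc (2 * k).
       (ad_coeff ?j n s * ad_coeff ?j m r * of_nat (((a + s) choose s) * ((a + s + r) choose r)))
       * ind_action k psi L (n + s * ?j) (ind_action k psi L (m + r * ?j) (slice F (a + s + r))) l)"
    by (rule ind_action_twice_Cons[OF assms(2,1)])
  also have "\<dots> =
    (\<Sum>r\<le>Suc (2 * k). \<Sum>s\<le>Suc (2 * k).
       (ad_coeff ?j m r * ad_coeff ?j n s * of_nat (((a + r) choose r) * ((a + r + s) choose s)))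
       * ind_action k psi L (n + s * ?j) (ind_action k psi L (m + r * ?j) (slice F (a + r + s))) l)"
  proof (subst sum.swap, intro sum.cong refl)
    fix r s
    have i: "a + s + r = a + r + s" by simp
    show "(ad_coeff ?j n s * ad_coeff ?j m r * of_nat (((a + s) choose s) * ((a + s + r) choose r)))
       * ind_action k psi L (n + s * ?j) (ind_action k psi L (m + r * ?j) (slice F (a + s + r))) l
      = (ad_coeff ?j m r * ad_coeff ?j n s * of_nat (((a + r) choose r) * ((a + r + s) choose s)))
       * ind_action k psi L (n + s * ?j) (ind_action k psi L (m + r * ?j) (slice F (a + r + s))) l"
      unfolding binomial_exchange unfolding i by (simp only: ac_simps)
  qed
  finally have swapped: "ind_action k psi (Suc L) n (ind_action k psi (Suc L) m F) (a # l) =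
    (\<Sum>r\<le>Suc (2 * k). \<Sum>s\<le>Suc (2 * k).
       (ad_coeff ?j m r * ad_coeff ?j n s * of_nat (((a + r) choose r) * ((a + r + s) choose s)))
       * ind_action k psi L (n + s * ?j) (ind_action k psi L (m + r * ?j) (slice F (a + r + s)))
           l)" .
  show ?thesis
    unfolding minus_apply ind_action_twice_Cons[OF assms] swapped sum_subtractf[symmetric]
      right_diff_distrib ..
qed

lemma sum_square_eq_sum_triangle:
  fixes h :: "nat \<Rightarrow> nat \<Rightarrow> 'a::comm_monoid_add"
  assumes "\<And>r s. B < r + s \<Longrightarrow> h r s = 0"
  shows "(\<Sum>r\<le>B. \<Sum>s\<le>B. h r s) = (\<Sum>t\<le>B. \<Sum>r\<le>t. h r (t - r))"
proof -
  have "(\<Sum>r\<le>B. \<Sum>s\<le>B. h r s) = (\<Sum>(r, s)\<in>{..B} \<times> {..B}. h r s)"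
    by (simp add: sum.cartesian_product)
  also have "\<dots> = (\<Sum>(r, s)\<in>{(r, s). r + s \<le> B}. h r s)"
  proof (rule sum.mono_neutral_right)
    show "\<forall>i\<in>{..B} \<times> {..B} - {(r, s). r + s \<le> B}. (case i of (r, s) \<Rightarrow> h r s) = 0"
    proof
      fix i assume "i \<in> {..B} \<times> {..B} - {(r, s). r + s \<le> B}"
      then obtain r s where "i = (r, s)" "B < r + s" by auto
      then show "(case i of (r, s) \<Rightarrow> h r s) = 0" using assms by simp
    qed
  qed auto
  also have "\<dots> = (\<Sum>t\<le>B. \<Sum>r\<le>t. h r (t - r))"
    by (rule sum.triangle_reindex_eq)
  finally show ?thesis .
qed

locale whittaker_character =
  fixes k :: nat and psi :: "nat \<Rightarrow> complex"
  assumes character: "\<forall>m\<ge>k. \<forall>n\<ge>k. of_int (int m - int n) * psi (m + n) = 0"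
begin

lemma character_vanish:
  assumes "2 * k + 1 \<le> N"
  shows "psi N = 0"
proof -
  have "of_int (int k - int (N - k)) * psi (k + (N - k)) = 0"
    by (rule character[rule_format]) (use assms in auto)
  moreover have "int k - int (N - k) \<noteq> 0"
    using assms by auto
  then have "(of_int (int k - int (N - k)) :: complex) \<noteq> 0"
    by (metis of_int_eq_0_iff)
  ultimately show ?thesis
    using assms by simp
qed

lemma ind_action_vanish: "L < k \<Longrightarrow> 2 * k + 1 \<le> N \<Longrightarrow> ind_action k psi L N F = 0"
proof (induct L arbitrary: N F)
  case (Suc L)
  have N: "N \<noteq> k - Suc L" and vanish: "\<And>s G. ind_action k psi L (N + s * (k - Suc L)) G = 0"
    using Suc by auto
  show ?case
  proof
    fix l
    show "ind_action k psi (Suc L) N F l = 0 l"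
      using N vanish by (cases l) (simp_all add: ind_action_Cons tens_apply)
  qed
qed (simp add: character_vanish fun_eq_iff tens_apply)

lemma ind_action_shifted_sum:
  assumes "Suc L < k" "n \<noteq> 0"
  shows "(\<Sum>s\<le>2 * k. ad_coeff (k - Suc L) n (Suc s) * of_nat ((a + s) choose s)
           * ind_action k psi L (n + Suc s * (k - Suc L)) (slice F (a + s)) l)
    = (of_nat n - of_nat (k - Suc L)) * ind_action k psi (Suc L) (n + (k - Suc L)) F (a # l)"
proof -
  let ?j = "k - Suc L"
  have big: "2 * k + 1 \<le> n + j + Suc (2 * k) * j" if "1 \<le> j" for j
    using that mult_le_mono2[of 1 j "Suc (2 * k)"] by simp
  have top: "ind_action k psi L (n + ?j + Suc (2 * k) * ?j) G = 0" for G
    using assms(1) by (intro ind_action_vanish big) simp_all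
  have "ind_action k psi (Suc L) (n + ?j) F (a # l)
      = (\<Sum>s\<le>Suc (2 * k). ad_coeff ?j (n + ?j) s * of_nat ((a + s) choose s)
           * ind_action k psi L (n + ?j + s * ?j) (slice F (a + s)) l)"
    using assms by (simp add: ind_action_Cons)
  also have "\<dots> = (\<Sum>s\<le>2 * k. ad_coeff ?j (n + ?j) s * of_nat ((a + s) choose s)
           * ind_action k psi L (n + ?j + s * ?j) (slice F (a + s)) l)"
    by (simp only: sum.atMost_Suc top zero_fun_apply mult_zero_right add_0_right)
  finally have expand: "ind_action k psi (Suc L) (n + ?j) F (a # l) = \<dots>" .
  have idx: "n + Suc s * ?j = n + ?j + s * ?j" for s
    by simp
  show ?thesis
    unfolding expand idx ad_coeff_Suc sum_distrib_left by (intro sum.cong refl) (simp add: ac_simps)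
qed

lemma ind_action_raise_head:
  assumes "Suc L < k" "k - Suc L < n"
  shows "ind_action k psi (Suc L) n (raise_head F) = raise_head (ind_action k psi (Suc L) n F)
     + tscale (of_nat n - of_nat (k - Suc L)) (ind_action k psi (Suc L) (n + (k - Suc L)) F)"
proof
  fix l
  show "ind_action k psi (Suc L) n (raise_head F) l = (raise_head (ind_action k psi (Suc L) n F)
     + tscale (of_nat n - of_nat (k - Suc L)) (ind_action k psi (Suc L) (n + (k - Suc L)) F)) l"
  proof (cases l)
    case (Cons a l')
    have "n \<noteq> k - Suc L" "n \<noteq> 0"
      using assms by auto
    then show ?thesis
      unfolding Cons plus_fun_apply tscale_apply ind_action_raise_head_Cons[OF \<open>n \<noteq> k - Suc L\<close>]
        ind_action_shifted_sum[OF assms(1) \<open>n \<noteq> 0\<close>] by simp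
  qed (simp add: tens_apply)
qed

end

lemma ad_coeff_double_sum:
  fixes V :: "nat \<Rightarrow> nat \<Rightarrow> complex"
  assumes j: "j \<noteq> 0" and vanish: "\<And>t. B < t \<Longrightarrow> V (m + n + t * j) (a + t) = 0"
  shows "(\<Sum>r\<le>B. \<Sum>s\<le>B.
      (ad_coeff j m r * ad_coeff j n s * of_nat (((a + r) choose r) * ((a + r + s) choose s)))
           * (of_int (int (m + r * j) - int (n + s * j)) * V (m + n + (r + s) * j) (a + r + s)))
    = of_int (int m - int n)
        * (\<Sum>t\<le>B. ad_coeff j (m + n) t * of_nat ((a + t) choose t) * V (m + n + t * j) (a + t))"
    (is "(\<Sum>r\<le>B. \<Sum>s\<le>B. ?h r s) = _")
proof -
  have "(\<Sum>r\<le>B. \<Sum>s\<le>B. ?h r s) = (\<Sum>t\<le>B. \<Sum>r\<le>t. ?h r (t - r))"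
  proof (rule sum_square_eq_sum_triangle)
    fix r s :: nat assume "B < r + s"
    then have "V (m + n + (r + s) * j) (a + r + s) = 0"
      using vanish[of "r + s"] by (simp add: add.assoc)
    then show "?h r s = 0" by simp
  qed
  also have "\<dots> = (\<Sum>t\<le>B. of_nat ((a + t) choose t) * V (m + n + t * j) (a + t)
      * (\<Sum>r\<le>t. of_nat (t choose r) * ad_coeff j m r * ad_coeff j n (t - r)
            * of_int (int (m + r * j) - int (n + (t - r) * j))))"
    unfolding sum_distrib_left
  proof (intro sum.cong refl)
    fix t r :: nat assume "r \<in> {..t}"
    then have rt: "r \<le> t" by simp
    then have idx: "r + (t - r) = t" "a + r + (t - r) = a + t" by auto
    have "of_nat (((a + r) choose r) * ((a + r + (t - r)) choose (t - r)))
        = (of_nat ((a + t) choose t) * of_nat (t choose r) :: complex)"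
      by (simp only: binomial_triangle[OF rt] of_nat_mult)
    then show "?h r (t - r) = of_nat ((a + t) choose t) * V (m + n + t * j) (a + t)
        * (of_nat (t choose r) * ad_coeff j m r * ad_coeff j n (t - r)
            * of_int (int (m + r * j) - int (n + (t - r) * j)))"
      unfolding idx by (simp only: ac_simps)
  qed
  also have "\<dots> = (\<Sum>t\<le>B. of_nat ((a + t) choose t) * V (m + n + t * j) (a + t)
      * (of_int (int m - int n) * ad_coeff j (m + n) t))"
    by (simp only: ad_coeff_commutator[OF j])
  also have "\<dots> = of_int (int m - int n)
      * (\<Sum>t\<le>B. ad_coeff j (m + n) t * of_nat ((a + t) choose t) * V (m + n + t * j) (a + t))"
    by (simp add: sum_distrib_left ac_simps)
  finally show ?thesis .
qed

context whittaker_character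
begin

lemma ind_action_bracket_Cons:
  assumes L: "Suc L < k" and m: "k - Suc L < m" and n: "k - Suc L < n"
    and IH: "\<And>p q G. k - L \<le> p \<Longrightarrow> k - L \<le> q \<Longrightarrow>
       ind_action k psi L p (ind_action k psi L q G) - ind_action k psi L q (ind_action k psi L p G)
         = tscale (of_int (int p - int q)) (ind_action k psi L (p + q) G)"
  shows "(ind_action k psi (Suc L) m (ind_action k psi (Suc L) n F)
          - ind_action k psi (Suc L) n (ind_action k psi (Suc L) m F)) (a # l)
     = of_int (int m - int n) * ind_action k psi (Suc L) (m + n) F (a # l)"
proof -
  let ?j = "k - Suc L"
  let ?V = "\<lambda>p t. ind_action k psi L p (slice F t) l"
  have j: "?j \<noteq> 0" and mj: "m \<noteq> ?j" "n \<noteq> ?j" "m + n \<noteq> ?j"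
    using assms by auto
  have level_L: "(ind_action k psi L (m + r * ?j) (ind_action k psi L (n + s * ?j) G)
        - ind_action k psi L (n + s * ?j) (ind_action k psi L (m + r * ?j) G)) l
      = of_int (int (m + r * ?j) - int (n + s * ?j))
          * ind_action k psi L (m + n + (r + s) * ?j) G l"
    for r s G
  proof -
    have le: "k - L \<le> m + r * ?j" "k - L \<le> n + s * ?j"
      using m n by auto
    have idx: "m + r * ?j + (n + s * ?j) = m + n + (r + s) * ?j"
      by (simp add: add_mult_distrib)
    show ?thesis
      using fun_cong[OF IH[OF le, of G, unfolded idx], of l] by (simp only: tscale_apply)
  qed
  have "(ind_action k psi (Suc L) m (ind_action k psi (Suc L) n F)
          - ind_action k psi (Suc L) n (ind_action k psi (Suc L) m F)) (a # l)
    = (\<Sum>r\<le>Suc (2 * k). \<Sum>s\<le>Suc (2 * k).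
         (ad_coeff ?j m r * ad_coeff ?j n s * of_nat (((a + r) choose r) * ((a + r + s) choose s)))
         * (of_int (int (m + r * ?j) - int (n + s * ?j)) * ?V (m + n + (r + s) * ?j) (a + r + s)))"
    unfolding ind_action_commutator_Cons[OF mj(1,2)] level_L ..
  also have "\<dots> = of_int (int m - int n) * (\<Sum>t\<le>Suc (2 * k).
      ad_coeff ?j (m + n) t * of_nat ((a + t) choose t) * ?V (m + n + t * ?j) (a + t))"
  proof (rule ad_coeff_double_sum[OF j])
    fix t assume "Suc (2 * k) < t"
    moreover have "1 \<le> ?j"
      using L by simp
    then have "t * 1 \<le> t * ?j"
      by (rule mult_le_mono2)
    ultimately have "2 * k + 1 \<le> m + n + t * ?j"
      by linarith
    then show "?V (m + n + t * ?j) (a + t) = 0"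
      using L by (simp add: ind_action_vanish tens_apply)
  qed
  also have "\<dots> = of_int (int m - int n) * ind_action k psi (Suc L) (m + n) F (a # l)"
    by (simp only: ind_action_Cons[OF mj(3)])
  finally show ?thesis .
qed

lemma ind_action_bracket:
  "L < k \<Longrightarrow> k - L \<le> m \<Longrightarrow> k - L \<le> n \<Longrightarrow>
   ind_action k psi L m (ind_action k psi L n F) - ind_action k psi L n (ind_action k psi L m F)
     = tscale (of_int (int m - int n)) (ind_action k psi L (m + n) F)"
proof (induct L arbitrary: m n F)
  case 0
  then have "of_int (int m - int n) * psi (m + n) = 0"
    using character by auto
  then show ?case
    by (auto simp: fun_eq_iff tens_apply algebra_simps)
next
  case (Suc L)
  let ?j = "k - Suc L"
  consider "m = n" | "m \<noteq> n" "m = ?j" | "m \<noteq> n" "n = ?j" | "?j < m" "?j < n"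
    using Suc.prems by linarith
  then show ?case
  proof cases
    case 1
    then show ?thesis by (simp add: fun_eq_iff tens_apply)
  next
    case 2
    then show ?thesis
      using Suc.prems ind_action_raise_head[OF Suc.prems(1), of n F]
      by (simp add: ind_action_raise fun_eq_iff tens_apply algebra_simps)
  next
    case 3
    then show ?thesis
      using Suc.prems ind_action_raise_head[OF Suc.prems(1), of m F]
      by (simp add: ind_action_raise fun_eq_iff tens_apply algebra_simps)
  next
    case 4
    have IH: "\<And>p q G. k - L \<le> p \<Longrightarrow> k - L \<le> q \<Longrightarrow>
       ind_action k psi L p (ind_action k psi L q G) - ind_action k psi L q (ind_action k psi L p G)
         = tscale (of_int (int p - int q)) (ind_action k psi L (p + q) G)"
      using Suc by simp
    show ?thesis (is "?lhs = ?rhs")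
    proof
      fix l
      show "?lhs l = ?rhs l"
        using ind_action_bracket_Cons[OF Suc.prems(1) 4 IH] by (cases l) (simp_all add: tens_apply)
    qed
  qed
qed

end

lemma ind_action_word_zeros:
  "L < k \<Longrightarrow> k \<le> n \<Longrightarrow>
   ind_action k psi L n (word (replicate L 0)) = tscale (psi n) (word (replicate L 0))"
proof (induct L)
  case (Suc L)
  have n: "n \<noteq> k - Suc L" and IH: "ind_action k psi L n (word (replicate L 0))
      = tscale (psi n) (word (replicate L 0))"
    using Suc by auto
  have slice: "slice (word (0 # replicate L 0)) t
      = (if t = 0 then word (replicate L 0) else 0)" for t
    by (auto simp: slice_def word_def fun_eq_iff tens_apply)
  show ?case
  proof
    fix l
    show "ind_action k psi (Suc L) n (word (replicate (Suc L) 0)) l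
        = tscale (psi n) (word (replicate (Suc L) 0)) l"
    proof (cases l)
      case (Cons a l')
      then show ?thesis
        using n by (cases "a = 0")
          (simp_all add: ind_action_Cons sum.atMost_Suc_shift slice IH tens_apply word_apply)
    qed (simp add: tens_apply word_apply)
  qed
qed simp

definition gscale :: "complex \<Rightarrow> (nat \<Rightarrow> tens) \<Rightarrow> (nat \<Rightarrow> tens)" where
  "gscale c X = (\<lambda>x. tscale c (X x))"

interpretation G: module gscale
  by standard (simp_all add: gscale_def fun_eq_iff tens_apply algebra_simps)

text \<open>On families indexed by \<open>x\<close>, \<open>d_0\<close> acts on the \<open>x\<close>-th member by \<open>x\<close>
  and \<open>d_n\<close> shifts the index by \<open>n\<close>, which realises \<open>[d_0, d_n] = -n d_n\<close>: this
  extends the level \<open>k - 1\<close> module of \<open>p_1\<close> to all of \<open>g\<close>.\<close>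

definition graded_action :: "nat \<Rightarrow> (nat \<Rightarrow> complex) \<Rightarrow> nat \<Rightarrow> (nat \<Rightarrow> tens) \<Rightarrow> (nat \<Rightarrow> tens)" where
  "graded_action k psi n X =
     (if n = 0 then (\<lambda>x. tscale (of_nat x) (X x)) else
         (\<lambda>x. ind_action k psi (k - 1) n (X (x + n))))"

lemma module_hom_graded_action: "module_hom gscale gscale (graded_action k psi n)"
  by (simp add: module_hom_iff G.module_axioms graded_action_def gscale_def fun_eq_iff
      ind_action.add ind_action.scale tens_apply algebra_simps)

interpretation graded_action: module_hom gscale gscale "graded_action k psi n" for k psi n
  by (rule module_hom_graded_action)

definition graded_word :: "nat \<Rightarrow> (nat \<Rightarrow> complex) \<Rightarrow> nat list \<Rightarrow> (nat \<Rightarrow> tens) \<Rightarrow> (nat \<Rightarrow> tens)" where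
  "graded_word k psi a = foldr (graded_action k psi) a"

interpretation graded_word: module_hom gscale gscale "graded_word k psi a" for k psi a
  unfolding graded_word_def
proof (induct a)
  case (Cons i a)
  then show ?case
    using module_hom_compose[OF Cons module_hom_graded_action[of k psi i]] by (simp add: comp_def)
qed (simp add: G.module_hom_ident)

definition model_map :: "nat \<Rightarrow> (nat \<Rightarrow> complex) \<Rightarrow> tens \<Rightarrow> (nat \<Rightarrow> tens)" where
  "model_map k psi f = (\<Sum>a\<in>supp f. gscale (f a)
      (graded_word k psi a (\<lambda>x. word (replicate (k - 1) 0))))"

context whittaker_character
begin

lemma graded_action_bracket:
  assumes "1 \<le> k"
  shows "graded_action k psi m (graded_action k psi n X)
      - graded_action k psi n (graded_action k psi m X)
    = gscale (of_int (int m - int n)) (graded_action k psi (m + n) X)"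
proof (cases "m = 0 \<or> n = 0")
  case True
  then show ?thesis
    by (auto simp: graded_action_def gscale_def fun_eq_iff ind_action.add ind_action.scale
        tens_apply
        algebra_simps)
next
  case False
  have "k - 1 < k" "k - (k - 1) \<le> m" "k - (k - 1) \<le> n"
    using assms False by auto
  from ind_action_bracket[OF this] False show ?thesis
    by (simp add: graded_action_def gscale_def fun_eq_iff tens_apply add_ac)
qed

lemma graded_action_word_zeros:
  "1 \<le> k \<Longrightarrow> k \<le> n \<Longrightarrow> graded_action k psi n (\<lambda>x. word (replicate (k - 1) 0))
     = gscale (psi n) (\<lambda>x. word (replicate (k - 1) 0))"
  by (simp add: graded_action_def gscale_def ind_action_word_zeros)

end

lemma model_map_eq_sum:
  assumes "finite A" "supp f \<subseteq> A"
  shows "model_map k psi f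
      = (\<Sum>a\<in>A. gscale (f a) (graded_word k psi a (\<lambda>x. word (replicate (k - 1) 0))))"
  unfolding model_map_def using assms
  by (intro sum.mono_neutral_left) (auto simp: supp_def)

lemma model_map_add:
  assumes "f \<in> Tens" "g \<in> Tens"
  shows "model_map k psi (f + g) = model_map k psi f + model_map k psi g"
proof -
  have fin: "finite (supp f \<union> supp g)"
    using assms by (simp add: Tens_iff_finite_supp)
  show ?thesis
    using model_map_eq_sum[OF fin] supp_add[of f g]
        by (simp add: tens_apply G.scale_left_distrib sum.distrib)
qed

lemma model_map_scale:
  "f \<in> Tens \<Longrightarrow> model_map k psi (tscale c f) = gscale c (model_map k psi f)"
  using model_map_eq_sum[of "supp f" "tscale c f"]
  by (simp add: Tens_iff_finite_supp supp_def tens_apply model_map_def G.scale_sum_right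
      subset_iff)

lemma model_map_word: "model_map k psi (word w)
    = graded_word k psi w (\<lambda>x. word (replicate (k - 1) 0))"
  using model_map_eq_sum[of "{w}" "word w"] by (simp add: supp_def word_apply)

lemma model_map_diff:
  assumes "f \<in> Tens" "g \<in> Tens"
  shows "model_map k psi (f - g) = model_map k psi f - model_map k psi g"
  using model_map_add[OF Tens_scale[OF assms(2), where c = "-1"] assms(1)]
    model_map_scale[OF assms(2), where c = "-1"]
  by (simp add: algebra_simps fun_eq_iff gscale_def tens_apply)

lemma model_map_kernel_subspace: "T.subspace {f \<in> Tens. model_map k psi f = 0}"
proof (rule T.subspaceI)
  show "0 \<in> {f \<in> Tens. model_map k psi f = 0}"
    by (simp add: T.subspace_0[OF Tens_subspace] model_map_def supp_def tens_apply)
qed (simp_all add: Tens_add Tens_scale model_map_add model_map_scale)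

context whittaker_character
begin

lemma model_map_Jrel:
  assumes "1 \<le> k"
  shows "Jrel k psi \<subseteq> {f \<in> Tens. model_map k psi f = 0}"
  unfolding Jrel_def
proof (rule T.span_minimal[OF _ model_map_kernel_subspace], safe)
  let ?v = "\<lambda>x. word (replicate (k - 1) 0)"
  fix x assume "x \<in> lie_rels"
  then obtain a b i j where x: "x = word (a @ [i, j] @ b) - word (a @ [j, i] @ b)
      - tscale (of_int (int i - int j)) (word (a @ [i + j] @ b))"
    unfolding lie_rels_def by blast
  then show "x \<in> Tens" by (simp add: Tens_diff Tens_scale)
  have "model_map k psi x = graded_word k psi a
      (graded_action k psi i (graded_action k psi j (graded_word k psi b ?v))
       - graded_action k psi j (graded_action k psi i (graded_word k psi b ?v))
       - gscale (of_int (int i - int j)) (graded_action k psi (i + j) (graded_word k psi b ?v)))"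
    by (simp add: x model_map_diff Tens_diff Tens_scale model_map_scale model_map_word
        graded_word_def
        graded_word.diff[unfolded graded_word_def] graded_word.scale[unfolded graded_word_def])
  then show "model_map k psi x = 0"
    by (simp add: graded_action_bracket[OF assms])
next
  let ?v = "\<lambda>x. word (replicate (k - 1) 0)"
  fix x assume "x \<in> whit_rels k psi"
  then obtain a i where i: "k \<le> i" and x: "x = word (a @ [i]) - tscale (psi i) (word a)"
    unfolding whit_rels_def by blast
  then show "x \<in> Tens" by (simp add: Tens_diff Tens_scale)
  have "model_map k psi x = graded_word k psi a (graded_action k psi i ?v - gscale (psi i) ?v)"
    by (simp add: x model_map_diff Tens_scale model_map_scale model_map_word graded_word_def
        graded_word.diff[unfolded graded_word_def] graded_word.scale[unfolded graded_word_def])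
  then show "model_map k psi x = 0"
    unfolding graded_action_word_zeros[OF assms i] by simp
qed

lemma Jrel_ne_Tens:
  assumes "1 \<le> k"
  shows "Jrel k psi \<noteq> Tens"
proof
  assume "Jrel k psi = Tens"
  then have "model_map k psi (word []) = 0"
    using model_map_Jrel[OF assms] by auto
  then have "word (replicate (k - 1) 0) = (0 :: tens)"
    by (simp add: model_map_word graded_word_def fun_eq_iff tens_apply)
  from fun_cong[OF this, of "replicate (k - 1) 0"] show False
    by (simp add: word_apply tens_apply)
qed

end

section \<open>The degree filtration modulo the relations\<close>

definition deg_less :: "nat \<Rightarrow> tens set" where
  "deg_less m = {f \<in> Tens. \<forall>a\<in>supp f. length a < m}"

definition deg_filt :: "nat \<Rightarrow> (nat \<Rightarrow> complex) \<Rightarrow> nat \<Rightarrow> tens set" where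
  "deg_filt k phi m = {f. \<exists>h\<in>deg_less m. f - h \<in> Jrel k phi}"

lemma deg_less_subspace: "T.subspace (deg_less m)"
proof (rule T.subspaceI)
  show "x + y \<in> deg_less m" if "x \<in> deg_less m" "y \<in> deg_less m" for x y
    using that supp_add[of x y] Tens_add unfolding deg_less_def by blast
  show "tscale c x \<in> deg_less m" if "x \<in> deg_less m" for c x
    using that supp_tscale[of c x] Tens_scale unfolding deg_less_def by blast
qed (simp add: deg_less_def T.subspace_0[OF Tens_subspace] supp_def tens_apply)

lemma word_in_deg_less: "length a < m \<Longrightarrow> word a \<in> deg_less m"
  by (simp add: deg_less_def supp_def word_apply)

lemma deg_less_mono: "m \<le> m' \<Longrightarrow> deg_less m \<subseteq> deg_less m'"
  by (auto simp: deg_less_def)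

lemma deg_less_0: "deg_less 0 = {0}"
  by (auto simp: deg_less_def supp_def fun_eq_iff tens_apply T.subspace_0[OF Tens_subspace])

lemma deg_filt_subspace: "T.subspace (deg_filt k phi m)"
proof (rule T.subspaceI)
  show "0 \<in> deg_filt k phi m"
    unfolding deg_filt_def using T.subspace_0[OF deg_less_subspace] Jrel_zero by force
  show "x + y \<in> deg_filt k phi m" if x: "x \<in> deg_filt k phi m" and y: "y \<in> deg_filt k phi m" for x y
  proof -
    obtain hx hy
      where h: "hx \<in> deg_less m" "x - hx \<in> Jrel k phi" "hy \<in> deg_less m" "y - hy \<in> Jrel k phi"
      using x y unfolding deg_filt_def by blast
    then have "hx + hy \<in> deg_less m" "(x + y) - (hx + hy) \<in> Jrel k phi"
      unfolding add_diff_add by (auto intro: T.subspace_add[OF deg_less_subspace] Jrel_add)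
    then show ?thesis
      unfolding deg_filt_def by blast
  qed
  show "tscale c x \<in> deg_filt k phi m" if x: "x \<in> deg_filt k phi m" for c x
  proof -
    obtain h where "h \<in> deg_less m" "x - h \<in> Jrel k phi"
      using x unfolding deg_filt_def by blast
    then have "tscale c h \<in> deg_less m" "tscale c x - tscale c h \<in> Jrel k phi"
      using T.subspace_scale[OF deg_less_subspace] Jrel_scale
      by (auto simp flip: T.scale_right_diff_distrib)
    then show ?thesis
      unfolding deg_filt_def by blast
  qed
qed

lemmas deg_filt_add = T.subspace_add[OF deg_filt_subspace]
  and deg_filt_diff = T.subspace_diff[OF deg_filt_subspace]
  and deg_filt_scale = T.subspace_scale[OF deg_filt_subspace]
  and deg_filt_sum = T.subspace_sum[OF deg_filt_subspace]

lemma Jrel_deg_filt: "f \<in> Jrel k phi \<Longrightarrow> f \<in> deg_filt k phi m"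
  unfolding deg_filt_def using T.subspace_0[OF deg_less_subspace] by force

lemma deg_less_subset_deg_filt: "deg_less m \<subseteq> deg_filt k phi m"
  unfolding deg_filt_def using Jrel_zero by force

lemma word_in_deg_filt: "length a < m \<Longrightarrow> word a \<in> deg_filt k phi m"
  using deg_less_subset_deg_filt word_in_deg_less by blast

lemma deg_filt_mono: "m \<le> m' \<Longrightarrow> deg_filt k phi m \<subseteq> deg_filt k phi m'"
  unfolding deg_filt_def using deg_less_mono by blast

lemma deg_filt_0: "deg_filt k phi 0 = Jrel k phi"
  by (simp add: deg_filt_def deg_less_0)

lemma lmul_deg_filt: "f \<in> deg_filt k phi m \<Longrightarrow> lmul i f \<in> deg_filt k phi (Suc m)"
proof -
  assume "f \<in> deg_filt k phi m"
  then obtain h where h: "h \<in> deg_less m" "f - h \<in> Jrel k phi"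
    unfolding deg_filt_def by blast
  have "lmul i h \<in> deg_less (Suc m)"
    using h(1) supp_lmul[of i h] lmul_in_Tens by (fastforce simp: deg_less_def)
  moreover have "lmul i f - lmul i h \<in> Jrel k phi"
    using lmul_Jrel[OF h(2)] by (simp add: lmul.diff)
  ultimately show ?thesis
    unfolding deg_filt_def by blast
qed

lemma whit_letter_deg_filt:
  "k \<le> i \<Longrightarrow> word (a @ [i] @ b) - tscale (phi i) (word (a @ b))
      \<in> deg_filt k phi (length a + length b)"
proof (induct b arbitrary: a i)
  case Nil
  then show ?case
    using Jrel_deg_filt[OF whit_rel_in_Jrel] by simp
next
  case (Cons c b)
  let ?m = "length a + length (c # b)"
  have mem: "(word (a @ [i, c] @ b) - word (a @ [c, i] @ b)
      - tscale (of_int (int i - int c)) (word (a @ [i + c] @ b)))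
       + (word ((a @ [c]) @ [i] @ b) - tscale (phi i) (word ((a @ [c]) @ b)))
       + tscale (of_int (int i - int c))
           (word (a @ [i + c] @ b) - tscale (phi (i + c)) (word (a @ b)))
       + tscale (of_int (int i - int c) * phi (i + c)) (word (a @ b)) \<in> deg_filt k phi ?m"
    (is "?X \<in> _")
  proof (intro deg_filt_add deg_filt_scale)
    show "word (a @ [i, c] @ b) - word (a @ [c, i] @ b)
        - tscale (of_int (int i - int c)) (word (a @ [i + c] @ b)) \<in> deg_filt k phi ?m"
      by (rule Jrel_deg_filt[OF lie_rel_in_Jrel])
    show "word ((a @ [c]) @ [i] @ b) - tscale (phi i) (word ((a @ [c]) @ b)) \<in> deg_filt k phi ?m"
      using Cons(1)[of i "a @ [c]"] Cons(2) by simp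
    show "word (a @ [i + c] @ b) - tscale (phi (i + c)) (word (a @ b)) \<in> deg_filt k phi ?m"
      using Cons(1)[of "i + c" a] Cons(2) deg_filt_mono[of "length a + length b" ?m] by auto
    show "word (a @ b) \<in> deg_filt k phi ?m"
      by (rule word_in_deg_filt) simp
  qed
  have "?X = word (a @ [i] @ c # b) - tscale (phi i) (word (a @ c # b))"
    by (simp add: fun_eq_iff tens_apply algebra_simps)
  with mem show ?case
    by (simp only:)
qed

lemma swap_letters_deg_filt:
  "word (p @ [x, y] @ q) - word (p @ [y, x] @ q) \<in> deg_filt k phi (length p + length q + 2)"
proof -
  have "(word (p @ [x, y] @ q) - word (p @ [y, x] @ q)
      - tscale (of_int (int x - int y)) (word (p @ [x + y] @ q)))
     + tscale (of_int (int x - int y)) (word (p @ [x + y] @ q))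
         \<in> deg_filt k phi (length p + length q + 2)"
    by (intro deg_filt_add deg_filt_scale Jrel_deg_filt[OF lie_rel_in_Jrel] word_in_deg_filt) simp
  then show ?thesis by simp
qed

lemma move_letter_front_deg_filt:
  "word (p @ a @ [x] @ b) - word (p @ [x] @ a @ b)
      \<in> deg_filt k phi (length p + length a + length b + 1)"
proof (induct a arbitrary: p)
  case Nil
  then show ?case by (simp add: T.subspace_0[OF deg_filt_subspace])
next
  case (Cons y a)
  have "word ((p @ [y]) @ a @ [x] @ b) - word ((p @ [y]) @ [x] @ a @ b)
     \<in> deg_filt k phi (length p + length (y # a) + length b + 1)"
    using Cons[of "p @ [y]"] by simp
  moreover have "word (p @ [x, y] @ (a @ b)) - word (p @ [y, x] @ (a @ b))
     \<in> deg_filt k phi (length p + length (y # a) + length b + 1)"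
    using swap_letters_deg_filt[of p x y "a @ b" k phi] by (simp add: ac_simps)
  ultimately show ?case
    using deg_filt_diff by fastforce
qed

lemma perm_word_deg_filt: "mset a = mset b \<Longrightarrow> word a - word b \<in> deg_filt k phi (length a)"
proof (induct b arbitrary: a)
  case Nil
  then show ?case by (simp add: T.subspace_0[OF deg_filt_subspace])
next
  case (Cons x b)
  then have "x \<in> set a"
    by (metis list.set_intros(1) set_mset_mset)
  then obtain a1 a2 where a: "a = a1 @ x # a2"
    by (meson split_list)
  have m: "mset (a1 @ a2) = mset b"
    using Cons(2) a by simp
  have l: "length a = Suc (length (a1 @ a2))"
    using a by simp
  have "lmul x (word (a1 @ a2) - word b) \<in> deg_filt k phi (length a)"
    using lmul_deg_filt[OF Cons(1)[OF m]] l by simp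
  moreover have "word ([] @ a1 @ [x] @ a2) - word ([] @ [x] @ a1 @ a2) \<in> deg_filt k phi (length a)"
    using move_letter_front_deg_filt[of "[]" a1 x a2 k phi] a by simp
  ultimately show ?case
    using a deg_filt_add by (fastforce simp: lmul.diff)
qed

lemma word_deg_filt_if_large_letter:
  assumes "i \<in> set a" "k \<le> i"
  shows "word a \<in> deg_filt k phi (length a)"
proof -
  obtain a1 a2 where a: "a = a1 @ [i] @ a2"
    using assms(1) by (metis append_Cons append_Nil split_list)
  have "length a1 + length a2 \<le> length a"
    using a by simp
  from subsetD[OF deg_filt_mono[OF this] whit_letter_deg_filt[OF assms(2), of a1 a2 phi]]
  have "(word (a1 @ [i] @ a2) - tscale (phi i) (word (a1 @ a2))) + tscale (phi i) (word (a1 @ a2))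
    \<in> deg_filt k phi (length a)"
    using a by (intro deg_filt_add deg_filt_scale word_in_deg_filt) simp_all
  then show ?thesis
    using a by simp
qed

section \<open>Leading terms\<close>

definition whit_op :: "(nat \<Rightarrow> complex) \<Rightarrow> nat \<Rightarrow> tens \<Rightarrow> tens" where
  "whit_op phi i f = lmul i f - tscale (phi i) f"

interpretation whit_op: module_hom tscale tscale "whit_op phi i" for phi i
  by unfold_locales (simp_all add: whit_op_def lmul.add lmul.scale algebra_simps)

lemma whit_op_Jrel: "f \<in> Jrel k phi \<Longrightarrow> whit_op phi i f \<in> Jrel k phi"
  unfolding whit_op_def by (intro Jrel_diff lmul_Jrel Jrel_scale)

definition whit_coeff :: "(nat \<Rightarrow> complex) \<Rightarrow> nat \<Rightarrow> nat \<Rightarrow> complex" where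
  "whit_coeff phi i y = of_int (int i - int y) * phi (i + y)"

text \<open>Reading a sorted word as a monomial in the symmetric algebra on
  \<open>d_0, \<dots>, d_(k-1)\<close>, \<open>sym_deriv y\<close> is the partial derivative by \<open>d_y\<close>.\<close>

definition sym_deriv :: "nat \<Rightarrow> tens \<Rightarrow> tens" where
  "sym_deriv y h = (\<Sum>a\<in>supp h. tscale (h a * of_nat (count (mset a) y))
      (word (sort (remove1 y a))))"

definition whit_deriv :: "nat \<Rightarrow> (nat \<Rightarrow> complex) \<Rightarrow> nat \<Rightarrow> tens \<Rightarrow> tens" where
  "whit_deriv k phi i h = (\<Sum>y<k. tscale (whit_coeff phi i y) (sym_deriv y h))"

definition pbw_form :: "nat \<Rightarrow> nat \<Rightarrow> tens \<Rightarrow> bool" where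
  "pbw_form k r h \<longleftrightarrow> h \<in> Tens \<and> (\<forall>a\<in>supp h. length a = r \<and> sorted a \<and> set a \<subseteq> {..<k})"

lemma supp_word [simp]: "supp (word a) = {a}"
  by (simp add: supp_def word_apply)

lemma sym_deriv_word:
  "sym_deriv y (word a) = tscale (of_nat (count (mset a) y)) (word (sort (remove1 y a)))"
  by (simp add: sym_deriv_def word_apply)

lemma whit_deriv_word:
  "whit_deriv k phi i (word a)
    = (\<Sum>y<k. tscale (whit_coeff phi i y * of_nat (count (mset a) y)) (word (sort (remove1 y a))))"
  by (simp add: whit_deriv_def sym_deriv_word)

lemma whit_deriv_expansion:
  assumes "h \<in> Tens"
  shows "whit_deriv k phi i h = (\<Sum>a\<in>supp h. tscale (h a) (whit_deriv k phi i (word a)))"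
proof -
  have "whit_deriv k phi i h = (\<Sum>y<k. \<Sum>a\<in>supp h. tscale (h a) (tscale (whit_coeff phi i y)
      (tscale (of_nat (count (mset a) y)) (word (sort (remove1 y a))))))"
    unfolding whit_deriv_def sym_deriv_def T.scale_sum_right by (simp add: ac_simps)
  then show ?thesis
    by (subst (asm) sum.swap) (simp add: whit_deriv_word T.scale_sum_right)
qed

lemma supp_sum: "supp (\<Sum>x\<in>A. f x) \<subseteq> (\<Union>x\<in>A. supp (f x))"
  by (auto simp: supp_def sum_fun_apply elim: sum.not_neutral_contains_not_neutral)

lemma supp_sym_deriv: "supp (sym_deriv y h) \<subseteq> (\<lambda>a. sort (remove1 y a)) ` {a \<in> supp h. y \<in> set a}"
proof
  fix b assume "b \<in> supp (sym_deriv y h)"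
  then obtain a where "a \<in> supp h" "h a * of_nat (count (mset a) y) \<noteq> 0" "sort (remove1 y a) = b"
    using sum_word_apply_nonzero[of "\<lambda>a. h a * of_nat (count (mset a) y)" "\<lambda>a. sort (remove1 y a)"
        "supp h" b]
    by (auto simp: in_supp_iff[of b] sym_deriv_def)
  then show "b \<in> (\<lambda>a. sort (remove1 y a)) ` {a \<in> supp h. y \<in> set a}"
    by force
qed

lemma whit_deriv_in_Tens: "whit_deriv k phi i h \<in> Tens"
  unfolding whit_deriv_def sym_deriv_def by (intro Tens_sum Tens_scale word_in_Tens)

lemma pbw_form_whit_deriv:
  assumes "pbw_form k (Suc r) h"
  shows "pbw_form k r (whit_deriv k phi i h)"
proof -
  have "supp (whit_deriv k phi i h) \<subseteq> (\<Union>y<k. supp (sym_deriv y h))"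
    unfolding whit_deriv_def using supp_sum supp_tscale by fastforce
  also have "\<dots> \<subseteq> {b. length b = r \<and> sorted b \<and> set b \<subseteq> {..<k}}"
    using supp_sym_deriv assms set_remove1_subset
    by (fastforce simp: pbw_form_def length_remove1)
  finally show ?thesis
    using whit_deriv_in_Tens by (auto simp: pbw_form_def)
qed

lemma sorted_eq_if_sort_remove1_eq:
  assumes "sorted a" "sorted a'" "y \<in> set a" "y \<in> set a'" "sort (remove1 y a') = sort (remove1 y a)"
  shows "a' = a"
proof -
  have "mset (remove1 y a') = mset (remove1 y a)"
    using assms(5) by (metis mset_sort)
  then have "mset a' = mset a"
    using assms(3,4) by (metis insert_DiffM mset_remove1 set_mset_mset)
  then show ?thesis
    using assms(1,2) by (metis sorted_sort_id sorted_list_of_multiset_mset)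
qed

lemma sym_deriv_nonzero:
  assumes h: "pbw_form k (Suc r) h" "h \<noteq> 0"
  shows "\<exists>y<k. sym_deriv y h \<noteq> 0"
proof -
  obtain a where a: "a \<in> supp h"
    using h by (auto simp: supp_def fun_eq_iff tens_apply)
  then have "a \<noteq> []" "sorted a" "set a \<subseteq> {..<k}"
    using h(1) by (auto simp: pbw_form_def)
  then obtain y where y: "y \<in> set a" "y < k"
    by (metis list.set_sel(1) lessThan_iff subsetD)
  have "sym_deriv y h (sort (remove1 y a))
      = (\<Sum>a'\<in>supp h. h a' * of_nat (count (mset a') y)
          * word (sort (remove1 y a')) (sort (remove1 y a)))"
    by (simp add: sym_deriv_def sum_fun_apply tscale_apply)
  also have "\<dots> = (\<Sum>a'\<in>{a}. h a' * of_nat (count (mset a') y)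
      * word (sort (remove1 y a')) (sort (remove1 y a)))"
  proof (rule sum.mono_neutral_right)
    show "finite (supp h)"
      using h(1) by (simp add: pbw_form_def Tens_iff_finite_supp)
    show "\<forall>a'\<in>supp h - {a}. h a' * of_nat (count (mset a') y)
        * word (sort (remove1 y a')) (sort (remove1 y a)) = 0"
    proof
      fix a' assume "a' \<in> supp h - {a}"
      then show "h a' * of_nat (count (mset a') y)
          * word (sort (remove1 y a')) (sort (remove1 y a)) = 0"
        using sorted_eq_if_sort_remove1_eq[of a a' y] h(1) \<open>sorted a\<close> y(1)
        by (cases "y \<in> set a'") (auto simp: pbw_form_def word_apply)
    qed
  qed (use a in auto)
  also have "\<dots> = h a * of_nat (count (mset a) y)"
    by (simp add: word_apply)
  also have "\<dots> \<noteq> 0"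
    using a y(1) by (simp add: supp_def)
  finally show ?thesis
    using y(2) by (auto simp: tens_apply)
qed

lemma whit_deriv_word_Cons:
  assumes "x < k"
  shows "whit_deriv k phi i (word (x # a))
    = (\<Sum>y<k. tscale (whit_coeff phi i y * of_nat (count (mset a) y))
        (word (sort (remove1 y (x # a)))))
      + tscale (whit_coeff phi i x) (word (sort a))"
proof -
  have "whit_deriv k phi i (word (x # a))
    = (\<Sum>y<k. tscale (whit_coeff phi i y * of_nat (count (mset a) y))
        (word (sort (remove1 y (x # a))))
         + (if y = x then tscale (whit_coeff phi i x) (word (sort a)) else 0))"
    unfolding whit_deriv_word
    by (intro sum.cong refl) (auto simp: fun_eq_iff tens_apply algebra_simps)
  then show ?thesis
    using assms by (simp add: sum.distrib)
qed

lemma lmul_whit_deriv_word: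
  "lmul x (whit_deriv k phi i (word a))
     - (\<Sum>y<k. tscale (whit_coeff phi i y * of_nat (count (mset a) y))
         (word (sort (remove1 y (x # a)))))
   \<in> deg_filt k phi (length a)"
proof -
  have "lmul x (whit_deriv k phi i (word a))
     - (\<Sum>y<k. tscale (whit_coeff phi i y * of_nat (count (mset a) y))
         (word (sort (remove1 y (x # a)))))
    = (\<Sum>y<k. tscale (whit_coeff phi i y * of_nat (count (mset a) y))
         (word (x # sort (remove1 y a)) - word (sort (remove1 y (x # a)))))"
    by (simp add: whit_deriv_word lmul.sum lmul.scale sum_subtractf T.scale_right_diff_distrib)
  also have "\<dots> \<in> deg_filt k phi (length a)"
  proof (intro deg_filt_sum)
    fix y
    show "tscale (whit_coeff phi i y * of_nat (count (mset a) y))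
         (word (x # sort (remove1 y a)) - word (sort (remove1 y (x # a))))
             \<in> deg_filt k phi (length a)"
    proof (cases "y \<in> set a")
      case True
      moreover from True have "a \<noteq> []"
        by auto
      ultimately have "mset (x # sort (remove1 y a)) = mset (sort (remove1 y (x # a)))"
        "length (x # sort (remove1 y a)) = length a"
        by (auto simp: length_remove1)
      then show ?thesis
        using perm_word_deg_filt by (metis deg_filt_scale)
    next
      case False
      then have "count (mset a) y = 0"
        by simp
      then show ?thesis
        by (simp only: of_nat_0 mult_zero_right T.scale_zero_left
            T.subspace_0[OF deg_filt_subspace])
    qed
  qed
  finally show ?thesis .
qed

text \<open>The leading term of \<open>(d_i - phi(d_i)) d_a\<close>, \<open>i \<ge> k\<close>, for a word \<open>a\<close> in
  \<open>d_0, \<dots>, d_(k-1)\<close>: commuting \<open>d_i\<close> to the right end produces \<open>d_i - phi(d_i)\<close>, which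
  lies in the relations, plus one commutator \<open>[d_i, d_y] = (i - y) d_(i+y)\<close> per letter
  \<open>d_y\<close>, and \<open>d_(i+y)\<close> acts as the scalar \<open>phi(d_(i+y))\<close> up to lower degree.\<close>

lemma whit_op_word_leading:
  assumes "set a \<subseteq> {..<k}" "k \<le> i"
  shows "whit_op phi i (word a) - whit_deriv k phi i (word a) \<in> deg_filt k phi (length a - 1)"
  using assms(1)
proof (induct a)
  case Nil
  have "whit_op phi i (word []) \<in> Jrel k phi"
    using whit_rel_in_Jrel[OF assms(2), of "[]" phi] by (simp add: whit_op_def)
  then show ?case
    by (simp add: whit_deriv_word deg_filt_0)
next
  case (Cons x a)
  let ?S = "\<Sum>y<k. tscale (whit_coeff phi i y * of_nat (count (mset a) y))
      (word (sort (remove1 y (x # a))))"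
  let ?R = "whit_op phi i (word a) - whit_deriv k phi i (word a)"
  have x: "x < k" and IH: "?R \<in> deg_filt k phi (length a - 1)"
    using Cons by auto
  have lie: "word ([] @ [i, x] @ a) - word ([] @ [x, i] @ a)
      - tscale (of_int (int i - int x)) (word ([] @ [i + x] @ a))
      \<in> deg_filt k phi (length a)"
    by (rule Jrel_deg_filt[OF lie_rel_in_Jrel])
  have whit: "word ([] @ [i + x] @ a) - tscale (phi (i + x)) (word ([] @ a))
      \<in> deg_filt k phi (length a)"
    using whit_letter_deg_filt[of k "i + x" "[]" a phi] assms(2) by simp
  have lower: "lmul x ?R \<in> deg_filt k phi (length a)"
  proof (cases a)
    case Nil
    with IH show ?thesis by (simp add: deg_filt_0 lmul_Jrel)
  next
    case (Cons y a')
    with lmul_deg_filt[OF IH] show ?thesis by simp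
  qed
  have sort: "word a - word (sort a) \<in> deg_filt k phi (length a)"
    by (rule perm_word_deg_filt) simp
  have "(word ([] @ [i, x] @ a) - word ([] @ [x, i] @ a)
      - tscale (of_int (int i - int x)) (word ([] @ [i + x] @ a)))
      + tscale (of_int (int i - int x))
          (word ([] @ [i + x] @ a) - tscale (phi (i + x)) (word ([] @ a)))
      + lmul x ?R + tscale (whit_coeff phi i x) (word a - word (sort a))
      + (lmul x (whit_deriv k phi i (word a)) - ?S) \<in> deg_filt k phi (length a)"
    (is "?X \<in> _")
    by (intro deg_filt_add deg_filt_scale lie whit lower sort lmul_whit_deriv_word)
  moreover have "?X = whit_op phi i (word (x # a)) - whit_deriv k phi i (word (x # a))"
    by (simp add: whit_deriv_word_Cons[OF x] whit_op_def whit_coeff_def lmul.add lmul.diff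
        lmul.scale
        fun_eq_iff tens_apply algebra_simps)
  ultimately show ?case
    by simp
qed

lemma whit_op_deg_filt:
  assumes "k \<le> i" "f \<in> deg_filt k phi (Suc r)"
  shows "whit_op phi i f \<in> deg_filt k phi r"
proof -
  obtain u where u: "u \<in> deg_less (Suc r)" "f - u \<in> Jrel k phi"
    using assms(2) unfolding deg_filt_def by blast
  then have "u \<in> Tens"
    by (simp add: deg_less_def)
  then have "whit_op phi i u = whit_op phi i (\<Sum>a\<in>supp u. tscale (u a) (word a))"
    by (intro arg_cong[where f = "whit_op phi i"] tens_expansion)
  also have "\<dots> = (\<Sum>a\<in>supp u. tscale (u a) (word (i # a) - tscale (phi i) (word a)))"
    by (simp add: whit_op.sum whit_op.scale) (simp add: whit_op_def)
  also have "\<dots> \<in> deg_filt k phi r"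
  proof (intro deg_filt_sum deg_filt_scale)
    fix a assume "a \<in> supp u"
    then have "length a \<le> r"
      using u(1) by (auto simp: deg_less_def)
    with whit_letter_deg_filt[OF assms(1), of "[]" a phi] deg_filt_mono
    show "word (i # a) - tscale (phi i) (word a) \<in> deg_filt k phi r"
      by fastforce
  qed
  finally have "whit_op phi i (f - u) + whit_op phi i u \<in> deg_filt k phi r"
    using Jrel_deg_filt[OF whit_op_Jrel[OF u(2)]] deg_filt_add by blast
  then show ?thesis
    by (simp add: whit_op.diff)
qed

lemma whit_op_pbw_form:
  assumes h: "pbw_form k (Suc r) h" and fh: "f - h \<in> deg_filt k phi (Suc r)" and i: "k \<le> i"
  shows "whit_op phi i f - whit_deriv k phi i h \<in> deg_filt k phi r"
proof -
  have hT: "h \<in> Tens"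
    using h by (simp add: pbw_form_def)
  have "whit_op phi i h = whit_op phi i (\<Sum>a\<in>supp h. tscale (h a) (word a))"
    by (intro arg_cong[where f = "whit_op phi i"] tens_expansion[OF hT])
  then have "whit_op phi i h - whit_deriv k phi i h
      = (\<Sum>a\<in>supp h. tscale (h a) (whit_op phi i (word a) - whit_deriv k phi i (word a)))"
    by (simp add: whit_op.sum whit_op.scale whit_deriv_expansion[OF hT] sum_subtractf
        T.scale_right_diff_distrib)
  also have "\<dots> \<in> deg_filt k phi r"
  proof (intro deg_filt_sum deg_filt_scale)
    fix a assume "a \<in> supp h"
    then have "set a \<subseteq> {..<k}" "length a - 1 = r"
      using h by (auto simp: pbw_form_def)
    with whit_op_word_leading[OF _ i] show "whit_op phi i (word a) - whit_deriv k phi i (word a)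
        \<in> deg_filt k phi r"
      by metis
  qed
  finally have "whit_op phi i (f - h) + (whit_op phi i h - whit_deriv k phi i h) \<in> deg_filt k phi r"
    using whit_op_deg_filt[OF i fh] deg_filt_add by blast
  then show ?thesis
    by (simp add: whit_op.diff)
qed

lemma word_sort_congr:
  assumes "length a \<le> r"
  shows "word a - (if length a = r \<and> set a \<subseteq> {..<k} then word (sort a) else 0) \<in> deg_filt k phi r"
proof (cases "length a = r")
  case True
  show ?thesis
  proof (cases "set a \<subseteq> {..<k}")
    case False
    then obtain i where "i \<in> set a" "k \<le> i"
      by (meson lessThan_iff not_le subsetI)
    with True False show ?thesis
      using word_deg_filt_if_large_letter[of i a k phi] by simp
  qed (use True perm_word_deg_filt[of a "sort a" k phi] in simp)
qed (use assms word_in_deg_filt in simp)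

lemma pbw_form_congr_exists:
  assumes u: "u \<in> deg_less (Suc r)"
  shows "\<exists>h. pbw_form k r h \<and> u - h \<in> deg_filt k phi r"
proof -
  let ?P = "\<lambda>a. length a = r \<and> set a \<subseteq> {..<k}"
  define h where "h = (\<Sum>a\<in>{a \<in> supp u. ?P a}. tscale (u a) (word (sort a)))"
  have uT: "u \<in> Tens"
    using u by (simp add: deg_less_def)
  then have fin: "finite (supp u)"
    by (simp add: Tens_iff_finite_supp)
  have "supp h \<subseteq> sort ` {a \<in> supp u. ?P a}"
  proof
    fix b assume "b \<in> supp h"
    then show "b \<in> sort ` {a \<in> supp u. ?P a}"
      using sum_word_apply_nonzero[of u sort "{a \<in> supp u. ?P a}" b]
      by (auto simp: h_def in_supp_iff[of b])
  qed
  moreover have "h \<in> Tens"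
    unfolding h_def by (intro Tens_sum Tens_scale word_in_Tens)
  ultimately have "pbw_form k r h"
    by (fastforce simp: pbw_form_def)
  have "u - h = (\<Sum>a\<in>supp u. tscale (u a) (word a)) - h"
    using tens_expansion[OF uT] by (rule arg_cong[where f = "\<lambda>x. x - h"])
  also have "\<dots> = (\<Sum>a\<in>supp u. tscale (u a) (word a - (if ?P a then word (sort a) else 0)))"
    unfolding h_def sum.inter_filter[OF fin] sum_subtractf[symmetric]
    by (intro sum.cong refl) (simp add: T.scale_right_diff_distrib)
  also have "\<dots> \<in> deg_filt k phi r"
    using u by (intro deg_filt_sum deg_filt_scale word_sort_congr) (auto simp: deg_less_def)
  finally show ?thesis
    using \<open>pbw_form k r h\<close> by blast
qed

lemma leading_pbw_form_exists:
  assumes f: "f \<in> Tens" "f \<notin> Jrel k phi"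
  shows "\<exists>r h. pbw_form k r h \<and> h \<noteq> 0 \<and> f - h \<in> deg_filt k phi r"
proof -
  obtain n where "\<forall>a\<in>supp f. length a < n"
    using finite_maxlen f(1) by (auto simp: Tens_iff_finite_supp)
  then have "f \<in> deg_less n"
    using f(1) by (simp add: deg_less_def)
  then have "f \<in> deg_filt k phi n"
    using deg_less_subset_deg_filt by blast
  moreover have "f \<notin> deg_filt k phi 0"
    using f(2) by (simp add: deg_filt_0)
  ultimately obtain r where r: "f \<in> deg_filt k phi (Suc r)" "f \<notin> deg_filt k phi r"
    using ex_least_nat_less[of "\<lambda>m. f \<in> deg_filt k phi m"] by blast
  then obtain u where u: "u \<in> deg_less (Suc r)" "f - u \<in> Jrel k phi"
    unfolding deg_filt_def by blast
  obtain h where h: "pbw_form k r h" "u - h \<in> deg_filt k phi r"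
    using pbw_form_congr_exists[OF u(1)] by blast
  have "(f - u) + (u - h) \<in> deg_filt k phi r"
    using Jrel_deg_filt[OF u(2)] h(2) by (rule deg_filt_add)
  then have "f - h \<in> deg_filt k phi r"
    by simp
  moreover from this r(2) have "h \<noteq> 0"
    by auto
  ultimately show ?thesis
    using h(1) by blast
qed

section \<open>Irreducibility\<close>

context whittaker_character
begin

lemma whit_coeff_triangular:
  assumes k: "1 \<le> k" and nondegenerate: "psi (2 * k - 1) \<noteq> 0 \<or> psi (2 * k) \<noteq> 0" and y: "y < k"
  shows "\<exists>i\<ge>k. whit_coeff psi i y \<noteq> 0 \<and> (\<forall>y'>y. whit_coeff psi i y' = 0)"
proof (cases "psi (2 * k) = 0")
  case False
  have "whit_coeff psi (2 * k - y) y' = 0" if "y < y'" for y'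
    using that y by (simp add: whit_coeff_def character_vanish)
  moreover have "whit_coeff psi (2 * k - y) y \<noteq> 0"
    using False y by (simp add: whit_coeff_def)
  ultimately show ?thesis
    using y by (intro exI[of _ "2 * k - y"]) auto
next
  case True
  with nondegenerate have "psi (2 * k - 1) \<noteq> 0"
    by simp
  moreover have "int (2 * k - 1 - y) - int y \<noteq> 0"
    using k y by presburger
  then have "(of_int (int (2 * k - 1 - y) - int y) :: complex) \<noteq> 0"
    by (metis of_int_eq_0_iff)
  moreover have "2 * k - 1 - y + y = 2 * k - 1"
    using k y by simp
  ultimately have "whit_coeff psi (2 * k - 1 - y) y \<noteq> 0"
    unfolding whit_coeff_def by (simp only: mult_eq_0_iff) simp
  moreover have "whit_coeff psi (2 * k - 1 - y) y' = 0" if "y < y'" for y'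
  proof -
    have "2 * k - 1 - y + y' = 2 * k \<or> 2 * k + 1 \<le> 2 * k - 1 - y + y'"
      using that y by linarith
    then show ?thesis
      using True by (auto simp: whit_coeff_def character_vanish)
  qed
  ultimately show ?thesis
    using y by (intro exI[of _ "2 * k - 1 - y"]) auto
qed

lemma sym_deriv_eq_0_if_whit_deriv_eq_0:
  assumes k: "1 \<le> k" and nondegenerate: "psi (2 * k - 1) \<noteq> 0 \<or> psi (2 * k) \<noteq> 0"
    and whit_deriv: "\<forall>i\<ge>k. whit_deriv k psi i h = 0"
  shows "y < k \<Longrightarrow> sym_deriv y h = 0"
proof (induct y rule: less_induct)
  case (less y)
  obtain i where i: "k \<le> i" "whit_coeff psi i y \<noteq> 0" "\<forall>y'>y. whit_coeff psi i y' = 0"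
    using whit_coeff_triangular[OF k nondegenerate less.prems] by blast
  have "(\<Sum>y'\<in>{..<k} - {y}. tscale (whit_coeff psi i y') (sym_deriv y' h)) = 0"
  proof (rule sum.neutral, rule ballI)
    fix y' assume "y' \<in> {..<k} - {y}"
    then show "tscale (whit_coeff psi i y') (sym_deriv y' h) = 0"
      using less.hyps[of y'] i(3) by (cases "y' < y") (auto simp: fun_eq_iff tens_apply)
  qed
  moreover have "y \<in> {..<k}"
    using less.prems by simp
  ultimately have "whit_deriv k psi i h = tscale (whit_coeff psi i y) (sym_deriv y h)"
    unfolding whit_deriv_def by (simp add: sum.remove[OF finite_lessThan])
  then have "tscale (whit_coeff psi i y) (sym_deriv y h) = 0"
    using whit_deriv i(1) by simp
  with i(2) show ?case
    by (simp add: fun_eq_iff tens_apply)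
qed

lemma whit_deriv_nonzero:
  assumes "1 \<le> k" "psi (2 * k - 1) \<noteq> 0 \<or> psi (2 * k) \<noteq> 0" "pbw_form k (Suc r) h" "h \<noteq> 0"
  shows "\<exists>i\<ge>k. whit_deriv k psi i h \<noteq> 0"
  using sym_deriv_nonzero[OF assms(3,4)] sym_deriv_eq_0_if_whit_deriv_eq_0[OF assms(1,2)] by blast

lemma word_Nil_in_submodule:
  assumes k: "1 \<le> k" and nondegenerate: "psi (2 * k - 1) \<noteq> 0 \<or> psi (2 * k) \<noteq> 0"
    and S: "T.subspace S" "Jrel k psi \<subseteq> S" "\<forall>i. \<forall>f\<in>S. lmul i f \<in> S"
  shows "g \<in> S \<Longrightarrow> pbw_form k r h \<Longrightarrow> h \<noteq> 0 \<Longrightarrow> g - h \<in> deg_filt k psi r \<Longrightarrow> word [] \<in> S"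
proof (induct r arbitrary: g h)
  case 0
  then have "supp h \<subseteq> {[]}"
    by (auto simp: pbw_form_def)
  then have h: "h = tscale (h []) (word [])"
    by (auto simp: fun_eq_iff tens_apply word_apply supp_def)
  have "h [] \<noteq> 0"
  proof
    assume "h [] = 0"
    with h have "h = tscale 0 (word [])"
      by metis
    with 0 show False
      by (simp add: fun_eq_iff tens_apply)
  qed
  have "g - h \<in> S"
    using 0 S(2) by (auto simp: deg_filt_0)
  from T.subspace_diff[OF S(1) 0(1) this] have "tscale (1 / h []) h \<in> S"
    by (simp add: T.subspace_scale[OF S(1)])
  moreover have "tscale (1 / h []) h = word []"
    using \<open>h [] \<noteq> 0\<close> by (subst h) simp
  ultimately show ?case
    by simp
next
  case (Suc r)
  obtain i where i: "k \<le> i" "whit_deriv k psi i h \<noteq> 0"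
    using whit_deriv_nonzero[OF k nondegenerate Suc.prems(2,3)] by blast
  have "whit_op psi i g \<in> S"
    unfolding whit_op_def using Suc.prems(1) S
        by (intro T.subspace_diff[OF S(1)] T.subspace_scale) auto
  with Suc.hyps pbw_form_whit_deriv[OF Suc.prems(2)] i(2) whit_op_pbw_form[OF Suc.prems(2,4) i(1)]
  show ?case
    by blast
qed

lemma irreducible_if_nondegenerate:
  assumes k: "1 \<le> k" and nondegenerate: "psi (2 * k - 1) \<noteq> 0 \<or> psi (2 * k) \<noteq> 0"
  shows "quasi_whittaker_irreducible k psi"
  unfolding quasi_whittaker_irreducible_def
proof (intro conjI allI impI)
  show "Jrel k psi \<noteq> Tens"
    by (rule Jrel_ne_Tens[OF k])
  fix S assume S: "T.subspace S \<and> Jrel k psi \<subseteq> S \<and> S \<subseteq> Tens \<and> (\<forall>i. \<forall>f\<in>S. lmul i f \<in> S)"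
  show "S = Jrel k psi \<or> S = Tens"
  proof (cases "S = Jrel k psi")
    case False
    then obtain f where f: "f \<in> S" "f \<notin> Jrel k psi"
      using S by blast
    then obtain r h where "pbw_form k r h" "h \<noteq> 0" "f - h \<in> deg_filt k psi r"
      using leading_pbw_form_exists[of f k psi] S by blast
    then have "word [] \<in> S"
      using word_Nil_in_submodule[OF k nondegenerate] S f(1) by blast
    then show ?thesis
      using Tens_subset_if_word_Nil S by blast
  qed simp
qed

end

section \<open>Degenerate characters\<close>

lemma Jrel_subset_Jrel_pred:
  assumes "1 \<le> k"
  shows "Jrel k phi \<subseteq> Jrel (k - 1) (phi(k - 1 := c))"
  unfolding Jrel_def
proof (rule T.span_mono)
  have "whit_rels k phi \<subseteq> whit_rels (k - 1) (phi(k - 1 := c))"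
  proof
    fix x assume "x \<in> whit_rels k phi"
    then obtain a i where i: "k \<le> i" and x: "x = word (a @ [i]) - tscale (phi i) (word a)"
      unfolding whit_rels_def by blast
    then have "x = word (a @ [i]) - tscale ((phi(k - 1 := c)) i) (word a)" "k - 1 \<le> i"
      using assms by auto
    then show "x \<in> whit_rels (k - 1) (phi(k - 1 := c))"
      unfolding whit_rels_def by blast
  qed
  then show "lie_rels \<union> whit_rels k phi \<subseteq> lie_rels \<union> whit_rels (k - 1) (phi(k - 1 := c))"
    by blast
qed

context whittaker_character
begin

lemma degenerate_vanish:
  assumes "psi (2 * k - 1) = 0" "psi (2 * k) = 0" "2 * k - 1 \<le> N"
  shows "psi N = 0"
proof -
  have "N = 2 * k - 1 \<or> N = 2 * k \<or> 2 * k + 1 \<le> N"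
    using assms(3) by linarith
  then show ?thesis
    using assms(1,2) character_vanish by auto
qed

lemma whittaker_character_pred:
  assumes "2 \<le> k" "psi (2 * k - 1) = 0" "psi (2 * k) = 0"
  shows "whittaker_character (k - 1) (psi(k - 1 := c))"
proof
  show "\<forall>m\<ge>k - 1. \<forall>n\<ge>k - 1. of_int (int m - int n) * (psi(k - 1 := c)) (m + n) = 0"
  proof (intro allI impI)
    fix m n assume "k - 1 \<le> m" "k - 1 \<le> n"
    moreover note degenerate_vanish[OF assms(2,3)]
    ultimately show "of_int (int m - int n) * (psi(k - 1 := c)) (m + n) = 0"
      using assms(1) by (cases "m = n") auto
  qed
qed

lemma not_irreducible_if_degenerate:
  assumes k: "1 \<le> k" and nonzero: "\<exists>i\<ge>k. psi i \<noteq> 0"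
    and degenerate: "psi (2 * k - 1) = 0" "psi (2 * k) = 0"
  shows "\<not> quasi_whittaker_irreducible k psi"
proof
  assume irr: "quasi_whittaker_irreducible k psi"
  have k2: "2 \<le> k"
  proof (rule ccontr)
    assume "\<not> 2 \<le> k"
    then have "k = 1" using k by simp
    with nonzero degenerate_vanish[OF degenerate] show False
      by auto
  qed
  define S where "S c = Jrel (k - 1) (psi(k - 1 := c))" for c
  have "S c = Jrel k psi" for c
  proof -
    have "Jrel k psi \<subseteq> S c"
      unfolding S_def using Jrel_subset_Jrel_pred[OF k] .
    moreover have "S c \<noteq> Tens"
      unfolding S_def using k2
      by (intro whittaker_character.Jrel_ne_Tens[OF whittaker_character_pred[OF k2 degenerate]])
          simp
    moreover have "T.subspace (S c)" "S c \<subseteq> Tens" "\<forall>i. \<forall>f\<in>S c. lmul i f \<in> S c"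
      by (simp_all add: S_def Jrel_subspace Jrel_subset_Tens lmul_Jrel)
    ultimately show ?thesis
      using irr unfolding quasi_whittaker_irreducible_def by blast
  qed
  then have "word ([] @ [k - 1]) - tscale c (word []) \<in> Jrel k psi" for c
    using whit_rel_in_Jrel[where k = "k - 1" and i = "k - 1" and phi = "psi(k - 1 := c)"
        and a = "[]"]
    by (simp add: S_def)
  from Jrel_diff[OF this[of 0] this[of 1]] have "word [] \<in> Jrel k psi"
    by (simp add: fun_eq_iff tens_apply)
  then show False
    using irr Jrel_eq_Tens_if_word_Nil by (simp add: quasi_whittaker_irreducible_def)
qed

end

theorem theorem4p9:
  fixes k :: nat and phi :: "nat \<Rightarrow> complex"
  assumes "k \<ge> 1"
    and "\<forall>m\<ge>k. \<forall>n\<ge>k. of_int (int m - int n) * phi (m + n) = 0"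
    and "\<exists>i\<ge>k. phi i \<noteq> 0"
  shows "quasi_whittaker_irreducible k phi \<longleftrightarrow> phi (2 * k - 1) \<noteq> 0 \<or> phi (2 * k) \<noteq> 0"
proof -
  interpret whittaker_character k phi
    by unfold_locales (rule assms(2))
  show ?thesis
    using irreducible_if_nondegenerate[OF assms(1)] not_irreducible_if_degenerate[OF assms(1,3)]
    by blast
qed

end
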